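(* Let $\mathcal{H}$ be a complex separable Hilbert space, $A\in\mathcal{B}(\mathcal{H})$ and $\mathcal{G}\subset\mathcal{H}$ a countable Bessel system such that $\{e^{tA}g\}_{g\in\mathcal{G},\,t\in[0,\infty)}$ is a semi-continuous frame for $\mathcal{H}$. Then the following are equivalent: (i) There exists $0<L<\infty$ such that $\{e^{tA}g\}_{g\in\mathcal{G},\,t\in[0,L]}$ is a semi-continuous frame for $\mathcal{H}$. (ii) There exist $0<L<\infty$ and a finite set $T=\{t_1,\dots,t_n\}$ with $0=t_1<t_2<\dots<t_n\le L$ such that $\{e^{tA}g\}_{g\in\mathcal{G},\,t\in T}$ is a frame for $\mathcal{H}$. (iii) The semigroup $\{e^{tA}\}_{t\ge0}$ is exponentially stable.
   Context: For $A\in\mathcal{B}(\mathcal{H})$, $e^{tA}:=\sum_{n\ge0}\frac{t^n}{n!}A^n$. The semigroup $\{e^{tA}\}_{t\ge0}$ is exponentially stable if there are constants $M\ge1$ and $\omega<0$ with $\|e^{tA}\|\le Me^{\omega t}$ for all $t\ge0$. A countable family $\{f_k\}\subset\mathcal{H}$ is a Bessel system if there is $C>0$ with $\sum_k|\langle f,f_k\rangle|^2\le C\|f\|^2$ for all $f\in\mathcal{H}$, and a frame if moreover there is $c>0$ with $c\|f\|^2\le\sum_k|\langle f,f_k\rangle|^2$ for all $f$. For a countable $\mathcal{G}\subset\mathcal{H}$ and an interval $\mathcal{T}\subset[0,\infty)$, $\{e^{tA}g\}_{g\in\mathcal{G},t\in\mathcal{T}}$ is a semi-continuous frame for $\mathcal{H}$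 if there are constants $c,C>0$ such that $c\|f\|^2\le\sum_{g\in\mathcal{G}}\int_{\mathcal{T}}|\langle f,e^{tA}g\rangle|^2\,dt\le C\|f\|^2$ for all $f\in\mathcal{H}$. *)

theory Defs
  imports "HOL-Analysis.Analysis"
begin

text \<open>Complex Hilbert spaces are not available in the distribution libraries;
  we introduce them as a type class: a complete real normed vector space
  with a compatible complex scalar multiplication and a complex inner product
  (linear in the first argument) inducing the norm.\<close>

class complex_hilbert = real_normed_vector + complete_space +
  fixes scaleC :: "complex \<Rightarrow> 'a \<Rightarrow> 'a"
    and cinner :: "'a \<Rightarrow> 'a \<Rightarrow> complex"
  assumes scaleC_add_right: "scaleC a (x + y) = scaleC a x + scaleC a y"
    and scaleC_add_left: "scaleC (a + b) x = scaleC a x + scaleC b x"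
    and scaleC_scaleC: "scaleC a (scaleC b x) = scaleC (a * b) x"
    and scaleC_one: "scaleC 1 x = x"
    and scaleR_scaleC: "scaleR r x = scaleC (complex_of_real r) x"
    and cinner_commute: "cinner x y = cnj (cinner y x)"
    and cinner_add_left: "cinner (x + y) z = cinner x z + cinner y z"
    and cinner_scaleC_left: "cinner (scaleC a x) y = a * cinner x y"
    and norm_eq_sqrt_cinner: "norm x = sqrt (Re (cinner x x))"

definition separable_space :: "'a::topological_space itself \<Rightarrow> bool" where
  "separable_space _ \<longleftrightarrow> (\<exists>D::'a set. countable D \<and> closure D = UNIV)"

definition bounded_clinear_op :: "('a::complex_hilbert \<Rightarrow> 'a) \<Rightarrow> bool" where
  "bounded_clinear_op A \<longleftrightarrow>
     (\<forall>x y. A (x + y) = A x + A y) \<and> (\<forall>c x. A (scaleC c x) = scaleC c (A x)) \<and>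
     (\<exists>K. \<forall>x. norm (A x) \<le> norm x * K)"

definition exp_op :: "('a::complex_hilbert \<Rightarrow> 'a) \<Rightarrow> real \<Rightarrow> 'a \<Rightarrow> 'a" where
  "exp_op A t x = (\<Sum>n. (t ^ n / fact n) *\<^sub>R (A ^^ n) x)"

definition exp_stable :: "('a::complex_hilbert \<Rightarrow> 'a) \<Rightarrow> bool" where
  "exp_stable A \<longleftrightarrow> (\<exists>M \<omega>. M \<ge> 1 \<and> \<omega> < 0 \<and>
      (\<forall>t\<ge>0. onorm (exp_op A t) \<le> M * exp (\<omega> * t)))"

definition bessel_fam :: "('i \<Rightarrow> 'a::complex_hilbert) \<Rightarrow> 'i set \<Rightarrow> bool" where
  "bessel_fam F I \<longleftrightarrow> countable I \<and> (\<exists>C>0. \<forall>f.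
     (\<integral>\<^sup>+ k. ennreal ((cmod (cinner f (F k)))\<^sup>2) \<partial>count_space I) \<le> ennreal (C * (norm f)\<^sup>2))"

definition frame_fam :: "('i \<Rightarrow> 'a::complex_hilbert) \<Rightarrow> 'i set \<Rightarrow> bool" where
  "frame_fam F I \<longleftrightarrow> countable I \<and> (\<exists>c>0. \<exists>C>0. \<forall>f.
     ennreal (c * (norm f)\<^sup>2) \<le> (\<integral>\<^sup>+ k. ennreal ((cmod (cinner f (F k)))\<^sup>2) \<partial>count_space I) \<and>
     (\<integral>\<^sup>+ k. ennreal ((cmod (cinner f (F k)))\<^sup>2) \<partial>count_space I) \<le> ennreal (C * (norm f)\<^sup>2))"

definition sc_frame :: "('a::complex_hilbert \<Rightarrow> 'a) \<Rightarrow> 'a set \<Rightarrow> real set \<Rightarrow> bool" where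
  "sc_frame A G T \<longleftrightarrow> (\<exists>c>0. \<exists>C>0. \<forall>f.
     ennreal (c * (norm f)\<^sup>2) \<le>
       (\<integral>\<^sup>+ g. (\<integral>\<^sup>+ t\<in>T. ennreal ((cmod (cinner f (exp_op A t g)))\<^sup>2) \<partial>lborel) \<partial>count_space G) \<and>
     (\<integral>\<^sup>+ g. (\<integral>\<^sup>+ t\<in>T. ennreal ((cmod (cinner f (exp_op A t g)))\<^sup>2) \<partial>lborel) \<partial>count_space G)
       \<le> ennreal (C * (norm f)\<^sup>2))"

end

theory Submission
  imports Defs
begin

text \<open>
  Write Psi_f(t) = sum_g |<f, e^(tA) g>|^2 for the orbit energy. Passing e^(sA) to its adjoint f'
  turns Psi_f(s + t) into Psi_f'(t); with the Bessel bound this shows that a time shift by at most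
  delta changes Psi_f by at most a factor 2 plus an arbitrarily small multiple of ||f||^2. Hence a
  frame on a window [0, L] gives a frame at the points of a fine grid of [0, L], and a frame at
  finitely many times in [0, L] gives a frame on the window [0, L + delta].

  If the semigroup is exponentially stable, the tail of the integral of Psi_f beyond L is a small
  multiple of ||f||^2 for large L, so the frame on [0, oo) restricts to a window. Conversely (Datko's
  argument), the lower window bound c and the upper bound C on [0, oo) bound e^(tA) uniformly by
  M = sqrt (C / c); then each of N disjoint windows before time 2NL carries at least
  c ||y||^4 / (M ||x||)^2 of the energy of y = e^(2NLA) x, whose total is at most C ||y||^2. For N
  large this gives ||e^(2NLA)|| <= 1/2, and exponential stability follows.
\<close>

section \<open>Complex inner products\<close>

context complex_hilbert begin
subclass banach ..
end

lemma cinner_zero_left [simp]: "cinner 0 y = 0"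
  using cinner_add_left[of 0 0 y] by simp

lemma cinner_minus_left: "cinner (- x) y = - cinner x y"
  using cinner_add_left[of x "- x" y] by (simp add: eq_neg_iff_add_eq_0 add.commute)

lemma cinner_diff_left: "cinner (x - y) z = cinner x z - cinner y z"
  using cinner_add_left[of x "- y" z] by (simp add: cinner_minus_left)

lemma cinner_add_right: "cinner x (y + z) = cinner x y + cinner x z"
  by (metis cinner_commute cinner_add_left complex_cnj_add)

lemma cinner_zero_right [simp]: "cinner x 0 = 0"
  by (metis cinner_commute cinner_zero_left complex_cnj_zero)

lemma cinner_minus_right: "cinner x (- y) = - cinner x y"
  by (metis cinner_commute cinner_minus_left complex_cnj_minus)

lemma cinner_diff_right: "cinner x (y - z) = cinner x y - cinner x z"
  by (metis cinner_commute cinner_diff_left complex_cnj_diff)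

lemma cinner_scaleC_right: "cinner x (scaleC a y) = cnj a * cinner x y"
  by (metis cinner_commute cinner_scaleC_left complex_cnj_mult)

lemma cinner_scaleR_right: "cinner x (r *\<^sub>R y) = complex_of_real r * cinner x y"
  by (simp add: scaleR_scaleC cinner_scaleC_right)

lemma cinner_self: "cinner x x = complex_of_real ((norm x)\<^sup>2)"
proof -
  have "Im (cinner x x) = 0"
    using cinner_commute[of x x] by (metis Im_complex_of_real Reals_cnj_iff complex_is_Real_iff)
  moreover have "Re (cinner x x) \<ge> 0"
    using norm_eq_sqrt_cinner[of x] norm_ge_zero by (metis real_sqrt_ge_0_iff)
  ultimately show ?thesis
    using norm_eq_sqrt_cinner[of x] by (simp add: complex_eq_iff)
qed

lemma power2_norm_eq_Re_cinner: "(norm x)\<^sup>2 = Re (cinner x x)"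
  by (simp add: cinner_self)

lemma norm_scaleC: "norm (scaleC a x) = cmod a * norm x"
proof -
  have "cinner (scaleC a x) (scaleC a x) = (a * cnj a) * cinner x x"
    by (simp add: cinner_scaleC_left cinner_scaleC_right)
  also have "a * cnj a = complex_of_real ((cmod a)\<^sup>2)"
    by (rule complex_norm_square[symmetric])
  finally have "Re (cinner (scaleC a x) (scaleC a x)) = (cmod a)\<^sup>2 * Re (cinner x x)"
    by (simp add: cinner_self)
  hence "(norm (scaleC a x))\<^sup>2 = (cmod a * norm x)\<^sup>2"
    by (simp add: power2_norm_eq_Re_cinner power_mult_distrib)
  thus ?thesis by (simp add: power2_eq_iff_nonneg)
qed

lemma scaleC_diff_right: "scaleC c (x - y) = scaleC c x - scaleC c y"
  by (metis scaleC_add_right diff_add_cancel add_diff_cancel)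

lemma scaleC_scaleR_commute: "scaleC c (r *\<^sub>R x) = r *\<^sub>R scaleC c x"
  by (simp add: scaleR_scaleC scaleC_scaleC mult.commute)

lemma bounded_linear_scaleC: "bounded_linear (scaleC c :: 'a::complex_hilbert \<Rightarrow> 'a)"
  by (rule bounded_linear_intro[where K="cmod c"])
     (simp_all add: scaleC_add_right scaleC_scaleR_commute norm_scaleC mult.commute)

lemma power2_norm_add:
  "(norm (x + y))\<^sup>2 = (norm x)\<^sup>2 + (norm y)\<^sup>2 + 2 * Re (cinner x y)"
proof -
  have "cinner (x + y) (x + y) = cinner x x + cinner y y + (cinner x y + cnj (cinner x y))"
    using cinner_commute[of y x] by (simp add: cinner_add_left cinner_add_right algebra_simps)
  thus ?thesis by (simp add: power2_norm_eq_Re_cinner)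
qed

lemma power2_norm_diff:
  "(norm (x - y))\<^sup>2 = (norm x)\<^sup>2 + (norm y)\<^sup>2 - 2 * Re (cinner x y)"
  using power2_norm_add[of x "- y"] by (simp add: cinner_minus_right)

lemma parallelogram_law:
  "(norm (x + y))\<^sup>2 + (norm (x - y))\<^sup>2 = 2 * (norm (x::'a::complex_hilbert))\<^sup>2 + 2 * (norm y)\<^sup>2"
  using power2_norm_add[of x y] power2_norm_diff[of x y] by simp

lemma cmod_cinner_le: "cmod (cinner x y) \<le> norm x * norm y"
proof (cases "y = 0")
  case False
  define c n where "c = cinner x y" and "n = (norm y)\<^sup>2"
  have n: "n > 0" using False by (simp add: n_def)
  define a where "a = c / complex_of_real n"
  have cc: "c * cnj c = complex_of_real ((cmod c)\<^sup>2)"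
    by (rule complex_norm_square[symmetric])
  have "cinner (x - scaleC a y) (x - scaleC a y)
      = cinner x x - cnj a * c - a * cnj c + a * cnj a * complex_of_real n"
    using cinner_commute[of y x]
    by (simp add: c_def n_def cinner_self[of y] cinner_diff_left cinner_diff_right
        cinner_scaleC_left cinner_scaleC_right algebra_simps)
  also have "\<dots> = cinner x x - complex_of_real ((cmod c)\<^sup>2 / n)"
    using n cc unfolding a_def by (simp add: field_simps)
  finally have "(norm (x - scaleC a y))\<^sup>2 = (norm x)\<^sup>2 - (cmod c)\<^sup>2 / n"
    by (simp add: power2_norm_eq_Re_cinner)
  hence "(cmod c)\<^sup>2 / n \<le> (norm x)\<^sup>2"
    by (metis diff_ge_0_iff_ge zero_le_power2)
  hence "(cmod c)\<^sup>2 \<le> (norm x * norm y)\<^sup>2"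
    using n by (simp add: field_simps power_mult_distrib n_def)
  thus ?thesis unfolding c_def by (simp add: power2_le_iff_abs_le)
qed simp

lemma bounded_linear_cinner_right: "bounded_linear (cinner (f::'a::complex_hilbert))"
  by (rule bounded_linear_intro[where K="norm f"])
     (simp_all add: cinner_add_right cinner_scaleR_right scaleR_conv_of_real cmod_cinner_le[of f, unfolded mult.commute[of "norm f"]])

lemma power2_cmod_le_triangle:
  "(cmod a)\<^sup>2 \<le> 2 * (cmod b)\<^sup>2 + 2 * (cmod (a - b))\<^sup>2"
proof -
  have "cmod a \<le> cmod b + cmod (a - b)"
    by (metis add.commute diff_add_cancel norm_triangle_ineq)
  hence "(cmod a)\<^sup>2 \<le> (cmod b + cmod (a - b))\<^sup>2"
    by (simp add: power_mono)
  also have "\<dots> \<le> 2 * (cmod b)\<^sup>2 + 2 * (cmod (a - b))\<^sup>2"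
    using sum_squares_bound[of "cmod b" "cmod (a - b)"] unfolding power2_sum by linarith
  finally show ?thesis .
qed

section \<open>Riesz representation and adjoints\<close>

lemma minimizing_sequence_dist_le:
  fixes X :: "nat \<Rightarrow> 'a::complex_hilbert"
  assumes d: "d \<ge> 0"
    and mid: "\<And>j k. 2 * d \<le> norm (X j + X k)"
    and near: "\<And>k. norm (X k) < d + 1 / (real k + 1)"
    and "j \<ge> M" "k \<ge> M"
  shows "(norm (X j - X k))\<^sup>2 \<le> (8 * d + 4) / (real M + 1)"
proof -
  define q ej ek where "q = 1 / (real M + 1)" and "ej = 1 / (real j + 1)"
    and "ek = 1 / (real k + 1)"
  have ej: "0 \<le> ej" "ej \<le> q" "q \<le> 1" and ek: "0 \<le> ek" "ek \<le> q"
    using assms(4,5) by (simp_all add: q_def ej_def ek_def frac_le)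
  have "(norm (X j))\<^sup>2 \<le> (d + ej)\<^sup>2" "(norm (X k))\<^sup>2 \<le> (d + ek)\<^sup>2"
    using near[of j] near[of k] unfolding ej_def ek_def by (auto intro: power_mono)
  moreover have "(2 * d)\<^sup>2 \<le> (norm (X j + X k))\<^sup>2"
    using mid[of j k] d by (intro power_mono) auto
  ultimately have "(norm (X j - X k))\<^sup>2 \<le> 2 * (d + ej)\<^sup>2 + 2 * (d + ek)\<^sup>2 - 4 * d\<^sup>2"
    using parallelogram_law[of "X j" "X k"] by (simp add: power_mult_distrib)
  also have "\<dots> = 4 * d * ej + 2 * ej * ej + 4 * d * ek + 2 * ek * ek"
    by (simp add: power2_eq_square algebra_simps)
  also have "\<dots> \<le> 4 * d * q + 2 * 1 * q + 4 * d * q + 2 * 1 * q"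
    using ej ek d by (intro add_mono mult_mono mult_left_mono) auto
  also have "\<dots> = (8 * d + 4) * q"
    by (simp add: algebra_simps)
  finally show ?thesis by (simp add: q_def)
qed

lemma minimizing_sequence_Cauchy:
  fixes X :: "nat \<Rightarrow> 'a::complex_hilbert"
  assumes "d \<ge> 0"
    and "\<And>j k. 2 * d \<le> norm (X j + X k)"
    and "\<And>k. norm (X k) < d + 1 / (real k + 1)"
  shows "Cauchy X"
proof (rule metric_CauchyI)
  fix e :: real
  assume e: "e > 0"
  obtain M :: nat where "real M > (8 * d + 4) / e\<^sup>2"
    using reals_Archimedean2 by blast
  hence "8 * d + 4 < real M * e\<^sup>2"
    using e by (simp add: divide_less_eq)
  hence "8 * d + 4 < (real M + 1) * e\<^sup>2"
    using e unfolding distrib_right by (smt (verit) zero_less_power)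
  hence "(8 * d + 4) / (real M + 1) < e\<^sup>2"
    by (simp add: divide_less_eq mult.commute)
  hence "dist (X m) (X n) < e" if "m \<ge> M" "n \<ge> M" for m n
  proof -
    have "(norm (X m - X n))\<^sup>2 < e\<^sup>2"
      using minimizing_sequence_dist_le[OF assms that] \<open>(8 * d + 4) / (real M + 1) < e\<^sup>2\<close>
      by linarith
    from power_less_imp_less_base[OF this] show ?thesis
      using e by (simp add: dist_norm)
  qed
  thus "\<exists>M. \<forall>m\<ge>M. \<forall>n\<ge>M. dist (X m) (X n) < e" by blast
qed

lemma minimal_norm_element:
  fixes H :: "'a::complex_hilbert set"
  assumes "closed H" "H \<noteq> {}"
    and midpoint: "\<And>x y. x \<in> H \<Longrightarrow> y \<in> H \<Longrightarrow> (1/2) *\<^sub>R (x + y) \<in> H"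
  obtains w where "w \<in> H" "\<And>x. x \<in> H \<Longrightarrow> norm w \<le> norm x"
proof -
  define d where "d = Inf (norm ` H)"
  have bdd: "bdd_below (norm ` H)" by (rule bdd_belowI[of _ 0]) auto
  have d_le: "d \<le> norm x" if "x \<in> H" for x
    unfolding d_def using that bdd by (simp add: cInf_lower)
  have d: "d \<ge> 0" unfolding d_def using assms(2) by (intro cInf_greatest) auto
  have "\<exists>x\<in>H. norm x < d + 1 / (real k + 1)" for k
    using cInf_lessD[of "norm ` H" "d + 1 / (real k + 1)"] assms(2) by (force simp: d_def)
  then obtain X where XH: "\<And>k. X k \<in> H" and near: "\<And>k. norm (X k) < d + 1 / (real k + 1)"
    by metis
  have "2 * d \<le> norm (X j + X k)" for j k
    using d_le[OF midpoint[OF XH XH, of j k]] by simp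
  then obtain w where Xw: "X \<longlonglongrightarrow> w"
    using minimizing_sequence_Cauchy[OF d _ near] Cauchy_convergent convergent_def by blast
  have "w \<in> H"
    using XH Xw \<open>closed H\<close> closed_sequentially by blast
  moreover have "(\<lambda>k. d + 1 / (real k + 1)) \<longlonglongrightarrow> d + 0"
    using LIMSEQ_inverse_real_of_nat by (intro tendsto_add) (simp_all add: inverse_eq_divide add.commute)
  hence "norm w \<le> d"
    using near by (intro LIMSEQ_le[OF tendsto_norm[OF Xw]]) (auto intro: less_imp_le)
  ultimately show ?thesis
    using that d_le order_trans by blast
qed

lemma minimal_norm_orthogonal_kernel:
  fixes \<phi> :: "'a::complex_hilbert \<Rightarrow> complex"
  assumes diff: "\<And>x y. \<phi> (x - y) = \<phi> x - \<phi> y"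
    and scale: "\<And>c x. \<phi> (scaleC c x) = c * \<phi> x"
    and w: "\<phi> w = 1" and minimal: "\<And>x. \<phi> x = 1 \<Longrightarrow> norm w \<le> norm x"
    and "\<phi> n = 0"
  shows "cinner w n = 0"
proof (rule ccontr)
  define c \<epsilon> where "c = cinner w n" and "\<epsilon> = 1 / ((norm n)\<^sup>2 + 1)"
  have "(norm n)\<^sup>2 + 1 > 0"
    by (simp add: add_nonneg_pos)
  hence \<epsilon>: "\<epsilon> > 0" "\<epsilon> * (norm n)\<^sup>2 < 1"
    by (simp_all add: \<epsilon>_def divide_less_eq)
  assume "cinner w n \<noteq> 0"
  hence c: "(cmod c)\<^sup>2 * \<epsilon> > 0"
    using \<epsilon> by (simp add: c_def)
  \<comment> \<open>moving from w by a small multiple of n stays on the hyperplane and shortens w\<close>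
  define l where "l = complex_of_real \<epsilon> * c"
  have cc: "cnj c * c = complex_of_real ((cmod c)\<^sup>2)"
    by (metis complex_norm_square mult.commute)
  have "(norm w)\<^sup>2 \<le> (norm (w - scaleC l n))\<^sup>2"
    using minimal[of "w - scaleC l n"] w \<open>\<phi> n = 0\<close> by (simp add: diff scale power_mono)
  also have "\<dots> = (norm w)\<^sup>2 + (cmod l * norm n)\<^sup>2 - 2 * Re (cnj l * c)"
    by (simp add: power2_norm_diff norm_scaleC cinner_scaleC_right c_def)
  also have "cnj l * c = complex_of_real (\<epsilon> * (cmod c)\<^sup>2)"
    unfolding l_def complex_cnj_mult complex_cnj_complex_of_real mult.assoc cc of_real_mult ..
  also have "cmod l = \<epsilon> * cmod c"
    using \<epsilon> by (simp add: l_def norm_mult)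
  finally have "0 \<le> (cmod c)\<^sup>2 * \<epsilon> * (\<epsilon> * (norm n)\<^sup>2 - 2)"
    by (simp add: power_mult_distrib power2_eq_square algebra_simps)
  thus False using c \<epsilon> by (simp add: zero_le_mult_iff)
qed

lemma hyperplane_minimal_norm_element:
  fixes \<phi> :: "'a::complex_hilbert \<Rightarrow> complex"
  assumes add: "\<And>x y. \<phi> (x + y) = \<phi> x + \<phi> y"
    and scale: "\<And>c x. \<phi> (scaleC c x) = c * \<phi> x"
    and bound: "\<And>x. cmod (\<phi> x) \<le> b * norm x" and "\<phi> z \<noteq> 0"
  obtains w where "\<phi> w = 1" "\<And>x. \<phi> x = 1 \<Longrightarrow> norm w \<le> norm x"
proof -
  have scaleR: "\<phi> (r *\<^sub>R x) = complex_of_real r * \<phi> x" for r x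
    by (simp add: scaleR_scaleC scale)
  have "bounded_linear \<phi>"
    using bound by (intro bounded_linear_intro[where K=b])
      (simp_all add: add scaleR scaleR_conv_of_real mult.commute)
  hence closed: "closed {x. \<phi> x = 1}"
    by (intro closed_Collect_eq continuous_on_const linear_continuous_on)
  have "scaleC (1 / \<phi> z) z \<in> {x. \<phi> x = 1}"
    using \<open>\<phi> z \<noteq> 0\<close> by (simp add: scale)
  hence nonempty: "{x. \<phi> x = 1} \<noteq> {}" by blast
  have midpoint: "(1/2) *\<^sub>R (x + y) \<in> {x. \<phi> x = 1}"
    if "x \<in> {x. \<phi> x = 1}" "y \<in> {x. \<phi> x = 1}" for x y
    using that by (simp add: scaleR add)
  obtain w where "w \<in> {x. \<phi> x = 1}" and "\<And>x. x \<in> {x. \<phi> x = 1} \<Longrightarrow> norm w \<le> norm x"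
    using minimal_norm_element[OF closed nonempty midpoint] by blast
  thus ?thesis using that by auto
qed

lemma riesz_representation:
  fixes \<phi> :: "'a::complex_hilbert \<Rightarrow> complex"
  assumes add: "\<And>x y. \<phi> (x + y) = \<phi> x + \<phi> y"
    and scale: "\<And>c x. \<phi> (scaleC c x) = c * \<phi> x"
    and bound: "\<And>x. cmod (\<phi> x) \<le> b * norm x" and "b \<ge> 0"
  shows "\<exists>y. (\<forall>x. \<phi> x = cinner x y) \<and> norm y \<le> b"
proof (cases "\<forall>x. \<phi> x = 0")
  case True
  thus ?thesis using \<open>b \<ge> 0\<close> by (intro exI[of _ 0]) simp
next
  case False
  then obtain w where w: "\<phi> w = 1" and minimal: "\<And>x. \<phi> x = 1 \<Longrightarrow> norm w \<le> norm x"
    using hyperplane_minimal_norm_element[OF add scale bound] by blast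
  have diff: "\<phi> (x - y) = \<phi> x - \<phi> y" for x y
    using add[of "x - y" y] by (simp add: eq_diff_eq)
  have orthogonal: "cinner w n = 0" if "\<phi> n = 0" for n
    using minimal_norm_orthogonal_kernel[OF diff scale w minimal that] .
  have "w \<noteq> 0"
    using w add[of 0 0] by auto
  define y where "y = (1 / (norm w)\<^sup>2) *\<^sub>R w"
  have rep: "\<phi> x = cinner x y" for x
  proof -
    have "cinner w (x - scaleC (\<phi> x) w) = 0"
      using w by (intro orthogonal) (simp add: diff scale)
    hence "cinner (x - scaleC (\<phi> x) w) w = 0"
      by (metis cinner_commute complex_cnj_zero)
    hence "cinner x w = \<phi> x * complex_of_real ((norm w)\<^sup>2)"
      by (simp add: cinner_diff_left cinner_scaleC_left cinner_self)
    thus ?thesis using \<open>w \<noteq> 0\<close> by (simp add: y_def cinner_scaleR_right field_simps)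
  qed
  have "norm y * norm y \<le> b * norm y"
    using rep[of y] complex_Re_le_cmod[of "\<phi> y"] bound[of y]
    by (simp add: power2_norm_eq_Re_cinner[symmetric] power2_eq_square)
  hence "norm y \<le> b"
    using \<open>b \<ge> 0\<close> by (cases "y = 0") (simp_all add: mult_le_cancel_right)
  thus ?thesis using rep by blast
qed

lemma adjoint_exists:
  fixes B :: "'a::complex_hilbert \<Rightarrow> 'a"
  assumes add: "\<And>x y. B (x + y) = B x + B y"
    and scale: "\<And>c x. B (scaleC c x) = scaleC c (B x)"
    and bound: "\<And>x. norm (B x) \<le> b * norm x" and "b \<ge> 0"
  shows "\<exists>f'. (\<forall>x. cinner f' x = cinner f (B x)) \<and> norm f' \<le> b * norm f"
proof -
  have "cmod (cinner (B x) f) \<le> b * norm f * norm x" for x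
    using cmod_cinner_le[of "B x" f] mult_right_mono[OF bound, of "norm f" x]
    by (simp add: ac_simps)
  hence "\<exists>y. (\<forall>x. cinner (B x) f = cinner x y) \<and> norm y \<le> b * norm f"
    using \<open>b \<ge> 0\<close>
    by (intro riesz_representation) (simp_all add: add scale cinner_add_left cinner_scaleC_left)
  thus ?thesis by (metis cinner_commute)
qed

lemma norm_le_of_adjoint_bound:
  fixes B :: "'a::complex_hilbert \<Rightarrow> 'a"
  assumes adjoint: "\<And>f. \<exists>f'. (\<forall>x. cinner f' x = cinner f (B x)) \<and> norm f' \<le> M * norm f"
    and "M \<ge> 0"
  shows "norm (B x) \<le> M * norm x"
proof -
  obtain f' where f': "\<forall>z. cinner f' z = cinner (B x) (B z)" "norm f' \<le> M * norm (B x)"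
    using adjoint by blast
  have "norm (B x) * norm (B x) = Re (cinner f' x)"
    using f'(1) by (simp add: power2_norm_eq_Re_cinner[symmetric] power2_eq_square)
  also have "\<dots> \<le> norm f' * norm x"
    using complex_Re_le_cmod cmod_cinner_le order_trans by blast
  also have "\<dots> \<le> M * norm (B x) * norm x"
    using f'(2) by (simp add: mult_right_mono)
  finally show ?thesis
    using \<open>M \<ge> 0\<close> by (cases "B x = 0") (simp_all add: ac_simps mult_le_cancel_left_pos)
qed

lemma norm_le_of_sums:
  fixes f :: "nat \<Rightarrow> 'a::banach"
  assumes "f sums s" "g sums S" "\<And>n. norm (f n) \<le> g n"
  shows "norm s \<le> S"
proof -
  have "summable (\<lambda>n. norm (f n))"
    using assms by (intro summable_comparison_test[OF _ sums_summable[OF assms(2)]]) auto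
  hence "norm (suminf f) \<le> (\<Sum>n. norm (f n))"
    by (rule summable_norm)
  also have "\<dots> \<le> suminf g"
    using \<open>summable (\<lambda>n. norm (f n))\<close> assms(2,3) by (intro suminf_le) (auto simp: sums_iff)
  finally have "norm (suminf f) \<le> suminf g" .
  thus ?thesis using assms(1,2) by (simp add: sums_iff)
qed

lemma power_add_divide_fact:
  "(s + t) ^ N / fact N = (\<Sum>m\<le>N. (s ^ m / fact m) * (t ^ (N - m) / fact (N - m)) :: real)"
  by (simp add: binomial_ring sum_divide_distrib binomial_fact)

lemma abs_summable_on_product:
  fixes a b :: "nat \<Rightarrow> real"
  assumes "\<And>m. a m \<ge> 0" "\<And>n. b n \<ge> 0" "summable a" "summable b"
  shows "(\<lambda>p. norm ((\<lambda>(m, n). a m * b n) p)) summable_on UNIV \<times> UNIV"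
proof -
  have "(\<lambda>n. a m * b n) summable_on UNIV" for m
    using assms(2,4) by (intro summable_on_cmult_right norm_summable_imp_summable_on) simp_all
  moreover have "infsum b UNIV = suminf b"
    using assms(2,4) by (intro infsumI norm_summable_imp_has_sum) (simp_all add: summable_sums)
  hence "infsum (\<lambda>n. a m * b n) UNIV = a m * suminf b" for m
    by (simp add: infsum_cmult_right')
  moreover have "(\<lambda>m. a m * suminf b) summable_on UNIV"
    using assms by (intro norm_summable_imp_summable_on) (simp_all add: summable_mult2 abs_mult suminf_nonneg)
  ultimately show ?thesis
    using assms(1,2) Infinite_Sum.abs_summable_on_Sigma_iff[of "\<lambda>(m,n). a m * b n" UNIV "\<lambda>_. UNIV"]
    by (simp add: abs_mult suminf_nonneg assms(4))
qed

lemma has_sum_diagonals: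
  fixes W :: "nat \<times> nat \<Rightarrow> 'a::{topological_comm_monoid_add, t3_space}"
  assumes "(W has_sum S) (UNIV \<times> UNIV)"
  shows "((\<lambda>N. \<Sum>m\<le>N. W (m, N - m)) has_sum S) UNIV"
proof -
  have "((\<lambda>(N, m). W (m, N - m)) has_sum S) (SIGMA N:UNIV. {..N})"
    using assms
    by (subst has_sum_reindex_bij_witness[where j="\<lambda>(N, m). (m, N - m)" and i="\<lambda>(m, n). (m + n, m)"])
       auto
  thus ?thesis by (rule has_sum_SigmaD) simp
qed

lemma ennreal_minus_le_of_le_add:
  assumes "ennreal a \<le> X + ennreal b" "0 \<le> b"
  shows "ennreal (a - b) \<le> X"
proof (cases X)
  case (real x)
  hence "ennreal a \<le> ennreal (x + b)"
    using assms by (simp add: ennreal_plus)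
  hence "a - b \<le> x"
    using real assms(2) ennreal_le_iff[of "x + b" a] by simp
  thus ?thesis using real by (simp add: ennreal_leI)
qed simp

lemma ennreal_divide_le_of_le_mult:
  assumes "ennreal a \<le> ennreal b * X" "b > 0"
  shows "ennreal (a / b) \<le> X"
proof (cases X)
  case (real x)
  hence "a \<le> b * x"
    using assms ennreal_le_iff[of "b * x" a] by (simp add: ennreal_mult)
  hence "a / b \<le> x"
    using assms(2) by (simp add: divide_le_eq mult.commute)
  thus ?thesis using real by (simp add: ennreal_leI)
qed simp

lemma borel_measurable_nn_integral_count_space:
  fixes F :: "'i \<Rightarrow> 'b \<Rightarrow> ennreal"
  assumes "countable I" and [measurable]: "\<And>i. i \<in> I \<Longrightarrow> F i \<in> borel_measurable M"
  shows "(\<lambda>x. \<integral>\<^sup>+i. F i x \<partial>count_space I) \<in> borel_measurable M"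
proof (cases "finite I")
  case False
  note bij = bij_betw_from_nat_into[OF \<open>countable I\<close> False]
  have "(\<lambda>x. \<integral>\<^sup>+i. F i x \<partial>count_space I) = (\<lambda>x. \<Sum>n. F (from_nat_into I n) x)"
    by (simp add: nn_integral_bij_count_space[symmetric, OF bij] nn_integral_count_space_nat)
  moreover have [measurable]: "F (from_nat_into I n) \<in> borel_measurable M" for n
    using False from_nat_into[of I n] by (simp add: infinite_imp_nonempty)
  ultimately show ?thesis by simp
qed (simp add: nn_integral_count_space_finite)

lemma nn_integral_count_space_Times_finite:
  fixes F :: "'a \<times> 'b \<Rightarrow> ennreal"
  assumes "finite T"
  shows "(\<integral>\<^sup>+k. F k \<partial>count_space (G \<times> T)) = (\<Sum>\<tau>\<in>T. \<integral>\<^sup>+g. F (g, \<tau>) \<partial>count_space G)"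
proof -
  have "(\<integral>\<^sup>+k. F k \<partial>count_space (G \<times> T)) = (\<integral>\<^sup>+k. F k * indicator (G \<times> T) k \<partial>count_space UNIV)"
    by (rule nn_integral_count_space_indicator) (simp add: NO_MATCH_def)
  also have "\<dots> = (\<integral>\<^sup>+k. (\<Sum>\<tau>\<in>T. F k * indicator (G \<times> {\<tau>}) k) \<partial>count_space UNIV)"
  proof -
    have "G \<times> T = (\<Union>\<tau>\<in>T. G \<times> {\<tau>})" by auto
    moreover have "disjoint_family_on (\<lambda>\<tau>. G \<times> {\<tau>}) T"
      by (auto simp: disjoint_family_on_def)
    ultimately show ?thesis
      using assms by (simp add: indicator_UN_disjoint sum_distrib_left)
  qed
  also have "\<dots> = (\<Sum>\<tau>\<in>T. \<integral>\<^sup>+k. F k * indicator (G \<times> {\<tau>}) k \<partial>count_space UNIV)"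
    by (rule nn_integral_sum) simp
  also have "\<dots> = (\<Sum>\<tau>\<in>T. \<integral>\<^sup>+g. F (g, \<tau>) \<partial>count_space G)"
  proof (rule sum.cong[OF refl])
    fix \<tau> :: 'b
    have "bij_betw (\<lambda>g. (g, \<tau>)) G (G \<times> {\<tau>})"
      by (auto simp: bij_betw_def inj_on_def)
    thus "(\<integral>\<^sup>+k. F k * indicator (G \<times> {\<tau>}) k \<partial>count_space UNIV) = (\<integral>\<^sup>+g. F (g, \<tau>) \<partial>count_space G)"
      by (simp add: nn_integral_count_space_indicator[symmetric] NO_MATCH_def
          nn_integral_bij_count_space[symmetric])
  qed
  finally show ?thesis .
qed

lemma set_nn_integral_mono_set:
  "S \<subseteq> S' \<Longrightarrow> (\<integral>\<^sup>+ t\<in>S. F t \<partial>M) \<le> (\<integral>\<^sup>+ t\<in>S'. F t \<partial>M)"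
  by (intro nn_integral_mono) (auto split: split_indicator)

lemma set_nn_integral_lborel_translate:
  fixes F :: "real \<Rightarrow> ennreal"
  assumes [measurable]: "F \<in> borel_measurable borel" "(+) s ` S \<in> sets borel"
  shows "(\<integral>\<^sup>+ t\<in>S. F (s + t) \<partial>lborel) = (\<integral>\<^sup>+ t\<in>(+) s ` S. F t \<partial>lborel)"
proof -
  have "(\<integral>\<^sup>+ t\<in>S. F (s + t) \<partial>lborel) = (\<integral>\<^sup>+ t. (\<lambda>u. F u * indicator ((+) s ` S) u) (s + t) \<partial>lborel)"
    by (intro nn_integral_cong) (simp add: indicator_def image_iff)
  also have "\<dots> = (\<integral>\<^sup>+ t\<in>(+) s ` S. F t \<partial>lborel)"
    using nn_integral_real_affine[of "\<lambda>u. F u * indicator ((+) s ` S) u" 1 s] by simp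
  finally show ?thesis .
qed

lemma set_nn_integral_atLeast_le_split:
  fixes F :: "real \<Rightarrow> ennreal"
  assumes "F \<in> borel_measurable borel"
  shows "(\<integral>\<^sup>+ t\<in>{a..}. F t \<partial>lborel) \<le> (\<integral>\<^sup>+ t\<in>{a..b}. F t \<partial>lborel) + (\<integral>\<^sup>+ t\<in>{b..}. F t \<partial>lborel)"
proof -
  have "(\<integral>\<^sup>+ t\<in>{a..}. F t \<partial>lborel) \<le> (\<integral>\<^sup>+ t. F t * indicator {a..b} t + F t * indicator {b..} t \<partial>lborel)"
    by (intro nn_integral_mono) (auto split: split_indicator)
  also have "\<dots> = (\<integral>\<^sup>+ t\<in>{a..b}. F t \<partial>lborel) + (\<integral>\<^sup>+ t\<in>{b..}. F t \<partial>lborel)"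
    using assms by (intro nn_integral_add) simp_all
  finally show ?thesis .
qed

lemma exists_exp_decay_less:
  fixes \<omega> :: real
  assumes "\<omega> < 0" "a > 0"
  obtains L where "L > 0" "C * (M * exp (\<omega> * L))\<^sup>2 < a"
proof -
  have "filterlim (\<lambda>t. \<omega> * t) at_bot at_top"
    using \<open>\<omega> < 0\<close> by (intro filterlim_tendsto_neg_mult_at_bot[OF tendsto_const] filterlim_ident)
  hence "((\<lambda>t. C * (M * exp (\<omega> * t))\<^sup>2) \<longlongrightarrow> C * (M * 0)\<^sup>2) at_top"
    by (intro tendsto_intros filterlim_compose[OF exp_at_bot])
  hence "\<forall>\<^sub>F t in at_top. C * (M * exp (\<omega> * t))\<^sup>2 < a"
    by (rule order_tendstoD(2)) (use \<open>a > 0\<close> in simp)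
  then obtain N where "\<And>t. t \<ge> N \<Longrightarrow> C * (M * exp (\<omega> * t))\<^sup>2 < a"
    by (auto simp: eventually_at_top_linorder)
  thus ?thesis
    using that[of "max N 1"] by simp
qed

lemma grid_point_below:
  fixes \<delta> t L :: real
  assumes "\<delta> > 0" "t \<in> {0..L}"
  obtains j where "j \<le> nat \<lceil>L / \<delta>\<rceil>" "real j * \<delta> \<le> t" "t - real j * \<delta> < \<delta>"
proof -
  define j where "j = nat \<lfloor>t / \<delta>\<rfloor>"
  have "real j = of_int \<lfloor>t / \<delta>\<rfloor>"
    using assms by (simp add: j_def)
  hence "real j \<le> t / \<delta>" "t / \<delta> < real j + 1"
    by linarith+
  moreover have "t / \<delta> \<le> L / \<delta>"
    using assms by (simp add: divide_right_mono)
  ultimately have "j \<le> nat \<lceil>L / \<delta>\<rceil>" "real j * \<delta> \<le> t" "t - real j * \<delta> < \<delta>"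
    using \<open>\<delta> > 0\<close> by (linarith, simp_all add: field_simps)
  thus ?thesis by (rule that)
qed

lemma lower_bound_of_interval_average:
  fixes F :: "real \<Rightarrow> ennreal"
  assumes "L > 0" "a \<ge> 0"
    and integral: "ennreal a \<le> (\<integral>\<^sup>+ t\<in>{0..L}. F t \<partial>lborel)"
    and pointwise: "\<And>t. t \<in> {0..L} \<Longrightarrow> F t \<le> 2 * S + ennreal (a / (2 * L))"
  shows "ennreal (a / (4 * L)) \<le> S"
proof -
  have "ennreal a \<le> (\<integral>\<^sup>+ t\<in>{0..L}. 2 * S + ennreal (a / (2 * L)) \<partial>lborel)"
    using integral by (rule order_trans) (intro nn_integral_mono, auto split: split_indicator simp: pointwise)
  also have "\<dots> = (2 * S + ennreal (a / (2 * L))) * ennreal L"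
    using \<open>L > 0\<close> by (simp add: nn_integral_cmult_indicator)
  also have "\<dots> = ennreal (2 * L) * S + ennreal (a / 2)"
  proof -
    have "ennreal (a / (2 * L)) * ennreal L = ennreal (a / 2)"
      using assms(1,2) by (simp add: ennreal_mult[symmetric])
    moreover have "ennreal (2 * L) = 2 * ennreal L"
      using \<open>L > 0\<close> by (simp add: ennreal_mult)
    ultimately show ?thesis
      by (simp add: distrib_left distrib_right ac_simps)
  qed
  finally have "ennreal (a - a / 2) \<le> ennreal (2 * L) * S"
    by (rule ennreal_minus_le_of_le_add) (use \<open>a \<ge> 0\<close> in simp)
  hence "ennreal (a / 2) \<le> ennreal (2 * L) * S"
    by simp
  from ennreal_divide_le_of_le_mult[OF this] show ?thesis
    using \<open>L > 0\<close> by (simp add: field_simps)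
qed

lemma sum_spaced_windows_le:
  fixes F :: "real \<Rightarrow> ennreal"
  assumes [measurable]: "F \<in> borel_measurable borel" and "L > 0"
  shows "(\<Sum>j<N. \<integral>\<^sup>+ t\<in>{real j * (2 * L) .. real j * (2 * L) + L}. F t \<partial>lborel)
    \<le> (\<integral>\<^sup>+ t\<in>{0..}. F t \<partial>lborel)"
proof -
  define I where "I = (\<lambda>j::nat. {real j * (2 * L) .. real j * (2 * L) + L})"
  have "I i \<inter> I j = {}" if "i < j" for i j
  proof -
    have "(real i + 1) * (2 * L) \<le> real j * (2 * L)"
      using that \<open>L > 0\<close> by (intro mult_right_mono) auto
    thus ?thesis using \<open>L > 0\<close> by (auto simp: I_def algebra_simps)
  qed
  hence disjoint: "disjoint_family_on I {..<N}"
    unfolding disjoint_family_on_def by (metis Int_commute nat_neq_iff)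
  have "(\<Sum>j<N. \<integral>\<^sup>+ t\<in>I j. F t \<partial>lborel) = (\<integral>\<^sup>+ t. (\<Sum>j<N. F t * indicator (I j) t) \<partial>lborel)"
    by (rule nn_integral_sum[symmetric]) (simp add: I_def)
  also have "\<dots> = (\<integral>\<^sup>+ t\<in>(\<Union>j<N. I j). F t \<partial>lborel)"
    by (simp add: sum_distrib_left[symmetric] indicator_UN_disjoint[OF _ disjoint])
  also have "\<dots> \<le> (\<integral>\<^sup>+ t\<in>{0..}. F t \<partial>lborel)"
    using \<open>L > 0\<close> by (intro set_nn_integral_mono_set) (auto simp: I_def intro: order_trans[rotated])
  finally show ?thesis by (simp add: I_def)
qed

section \<open>The exponential of a bounded operator\<close>

lemma half_power_floor_le:
  fixes t t0 :: real
  assumes "t0 > 0" "t \<ge> 0"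
  shows "(1/2) ^ nat \<lfloor>t / t0\<rfloor> \<le> 2 * exp (- ln 2 / t0 * t)"
proof -
  define m where "m = nat \<lfloor>t / t0\<rfloor>"
  have "real m = of_int \<lfloor>t / t0\<rfloor>"
    using assms by (simp add: m_def)
  hence "t / t0 - 1 \<le> real m"
    by linarith
  hence "real m * (- ln 2) \<le> (t / t0 - 1) * (- ln 2)"
    by (intro mult_right_mono_neg) simp_all
  have "(1/2::real) ^ m = exp (- ln 2) ^ m"
    by (simp add: exp_minus)
  also have "\<dots> = exp (real m * (- ln 2))"
    by (rule exp_of_nat_mult[symmetric])
  also have "\<dots> \<le> exp ((t / t0 - 1) * (- ln 2))"
    using \<open>real m * (- ln 2) \<le> (t / t0 - 1) * (- ln 2)\<close> by simp
  also have "(t / t0 - 1) * (- ln 2) = ln 2 + - ln 2 / t0 * t"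
    using \<open>t0 > 0\<close> by (simp add: field_simps)
  also have "exp (ln 2 + - ln 2 / t0 * t) = 2 * exp (- ln 2 / t0 * t)"
    by (simp only: exp_add exp_ln)
  finally show ?thesis
    unfolding m_def .
qed

locale bounded_operator =
  fixes A :: "'a::complex_hilbert \<Rightarrow> 'a" and K :: real
  assumes add: "A (x + y) = A x + A y"
    and scaleC: "A (scaleC c x) = scaleC c (A x)"
    and norm_le: "norm (A x) \<le> K * norm x"
    and bound_nonneg: "0 \<le> K"
begin

lemma iterate_add: "(A ^^ n) (x + y) = (A ^^ n) x + (A ^^ n) y"
  by (induction n) (simp_all add: add)

lemma iterate_scaleC: "(A ^^ n) (scaleC c x) = scaleC c ((A ^^ n) x)"
  by (induction n) (simp_all add: scaleC)

lemma iterate_scaleR: "(A ^^ n) (r *\<^sub>R x) = r *\<^sub>R ((A ^^ n) x)"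
  by (simp add: scaleR_scaleC iterate_scaleC)

lemma norm_iterate_le: "norm ((A ^^ n) x) \<le> K ^ n * norm x"
proof (induction n)
  case (Suc n)
  have "norm ((A ^^ Suc n) x) \<le> K * norm ((A ^^ n) x)"
    using norm_le by simp
  also have "\<dots> \<le> K * (K ^ n * norm x)"
    using Suc bound_nonneg by (simp add: mult_left_mono)
  finally show ?case by simp
qed simp

lemma bounded_linear_iterate: "bounded_linear (A ^^ n)"
proof (rule bounded_linear_intro[where K="K ^ n"])
  show "norm ((A ^^ n) x) \<le> norm x * K ^ n" for x
    using norm_iterate_le[of n x] by (simp add: mult.commute)
qed (simp_all add: iterate_add iterate_scaleR)

definition exp_term :: "real \<Rightarrow> 'a \<Rightarrow> nat \<Rightarrow> 'a" where
  "exp_term t x n = (t ^ n / fact n) *\<^sub>R (A ^^ n) x"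

lemma norm_exp_term_le: "norm (exp_term t x n) \<le> (\<bar>t\<bar> * K) ^ n / fact n * norm x"
proof -
  have "norm (exp_term t x n) = \<bar>t\<bar> ^ n / fact n * norm ((A ^^ n) x)"
    by (simp add: exp_term_def power_abs)
  also have "\<dots> \<le> \<bar>t\<bar> ^ n / fact n * (K ^ n * norm x)"
    by (rule mult_left_mono[OF norm_iterate_le]) simp
  finally show ?thesis by (simp add: power_mult_distrib)
qed

lemma exp_majorant_sums: "(\<lambda>n. (\<bar>t\<bar> * K) ^ n / fact n * norm x) sums (exp (\<bar>t\<bar> * K) * norm x)"
  using sums_mult2[OF exp_converges[of "\<bar>t\<bar> * K"], of "norm x"]
  by (simp add: divide_inverse_commute)

lemma summable_norm_exp_term: "summable (\<lambda>n. norm (exp_term t x n))"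
  by (rule summable_comparison_test[OF _ sums_summable[OF exp_majorant_sums[of t x]]])
     (use norm_exp_term_le in simp)

lemma exp_op_sums: "exp_term t x sums exp_op A t x"
  using summable_norm_cancel[OF summable_norm_exp_term]
  by (simp add: exp_op_def exp_term_def[abs_def] summable_sums)

lemma norm_exp_op_le: "norm (exp_op A t x) \<le> exp (\<bar>t\<bar> * K) * norm x"
  by (rule norm_le_of_sums[OF exp_op_sums exp_majorant_sums norm_exp_term_le])

lemma norm_exp_op_minus_le: "norm (exp_op A t x - x) \<le> (exp (\<bar>t\<bar> * K) - 1) * norm x"
proof (rule norm_le_of_sums)
  show "(\<lambda>n. exp_term t x (Suc n)) sums (exp_op A t x - x)"
    using exp_op_sums[of t x] by (subst sums_Suc_iff) (simp add: exp_term_def)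
  show "(\<lambda>n. (\<bar>t\<bar> * K) ^ Suc n / fact (Suc n) * norm x) sums ((exp (\<bar>t\<bar> * K) - 1) * norm x)"
    using exp_majorant_sums[of t x] by (subst sums_Suc_iff) (simp add: algebra_simps)
qed (rule norm_exp_term_le)

lemma exp_op_add: "exp_op A t (x + y) = exp_op A t x + exp_op A t y"
proof -
  have "exp_term t (x + y) = (\<lambda>n. exp_term t x n + exp_term t y n)"
    by (simp add: exp_term_def iterate_add fun_eq_iff scaleR_add_right)
  thus ?thesis
    using sums_add[OF exp_op_sums exp_op_sums] exp_op_sums sums_unique2 by metis
qed

lemma exp_op_scaleC: "exp_op A t (scaleC c x) = scaleC c (exp_op A t x)"
proof -
  have "exp_term t (scaleC c x) = (\<lambda>n. scaleC c (exp_term t x n))"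
    by (simp add: exp_term_def iterate_scaleC fun_eq_iff scaleC_scaleR_commute)
  thus ?thesis
    using bounded_linear.sums[OF bounded_linear_scaleC exp_op_sums] exp_op_sums sums_unique2
    by metis
qed

lemma exp_op_diff: "exp_op A t (x - y) = exp_op A t x - exp_op A t y"
  by (metis exp_op_add diff_add_cancel eq_diff_eq)

lemma bounded_linear_exp_op: "bounded_linear (exp_op A t)"
proof (rule bounded_linear_intro[where K="exp (\<bar>t\<bar> * K)"])
  show "norm (exp_op A t x) \<le> norm x * exp (\<bar>t\<bar> * K)" for x
    using norm_exp_op_le[of t x] by (simp add: mult.commute)
qed (simp_all add: exp_op_add scaleR_scaleC exp_op_scaleC)

definition exp_double_term :: "real \<Rightarrow> real \<Rightarrow> 'a \<Rightarrow> nat \<times> nat \<Rightarrow> 'a" where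
  "exp_double_term s t x = (\<lambda>(m, n). (s ^ m / fact m * (t ^ n / fact n)) *\<^sub>R (A ^^ (m + n)) x)"

lemma abs_summable_exp_double_term:
  "(\<lambda>p. norm (exp_double_term s t x p)) summable_on UNIV \<times> UNIV"
proof (rule Infinite_Sum.abs_summable_on_comparison_test[OF abs_summable_on_product])
  show "summable (\<lambda>m. (\<bar>s\<bar> * K) ^ m / fact m)"
    using exp_converges[of "\<bar>s\<bar> * K"] sums_summable by (simp add: divide_inverse_commute)
  show "summable (\<lambda>n. (\<bar>t\<bar> * K) ^ n / fact n * norm x)"
    using exp_majorant_sums sums_summable by blast
  fix p :: "nat \<times> nat"
  obtain m n where p: "p = (m, n)" by (cases p)
  have "norm (exp_double_term s t x p)
      = \<bar>s\<bar> ^ m / fact m * (\<bar>t\<bar> ^ n / fact n) * norm ((A ^^ (m + n)) x)"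
    by (simp add: p exp_double_term_def power_abs abs_mult)
  also have "\<dots> \<le> \<bar>s\<bar> ^ m / fact m * (\<bar>t\<bar> ^ n / fact n) * (K ^ (m + n) * norm x)"
    by (rule mult_left_mono) (simp_all add: norm_iterate_le)
  finally show "norm (exp_double_term s t x p)
      \<le> norm ((\<lambda>(m, n). (\<bar>s\<bar> * K) ^ m / fact m * ((\<bar>t\<bar> * K) ^ n / fact n * norm x)) p)"
    using bound_nonneg by (simp add: p power_add power_mult_distrib abs_mult power_abs ac_simps)
qed (use bound_nonneg in simp_all)

lemma exp_double_term_row_has_sum:
  "((\<lambda>n. exp_double_term s t x (m, n)) has_sum exp_term s (exp_op A t x) m) UNIV"
proof -
  have "(exp_term t x has_sum exp_op A t x) UNIV"
    by (rule norm_summable_imp_has_sum[OF summable_norm_exp_term exp_op_sums])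
  hence "((\<lambda>n. (s ^ m / fact m) *\<^sub>R (A ^^ m) (exp_term t x n))
      has_sum (s ^ m / fact m) *\<^sub>R (A ^^ m) (exp_op A t x)) UNIV"
    by (rule has_sum_bounded_linear[OF bounded_linear_compose[OF bounded_linear_scaleR_right bounded_linear_iterate]])
  thus ?thesis
    by (simp add: exp_double_term_def exp_term_def iterate_scaleR funpow_add)
qed

lemma exp_double_term_diagonal_sum:
  "(\<Sum>m\<le>N. exp_double_term s t x (m, N - m)) = exp_term (s + t) x N"
  by (simp add: exp_double_term_def exp_term_def power_add_divide_fact scaleR_sum_left)

text \<open>Cauchy product: the rows of the double series sum to e^(sA) e^(tA) x, its diagonals to e^((s+t)A) x.\<close>
lemma exp_op_plus: "exp_op A (s + t) x = exp_op A s (exp_op A t x)"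
proof -
  obtain S where W: "(exp_double_term s t x has_sum S) (UNIV \<times> UNIV)"
    using abs_summable_summable[OF abs_summable_exp_double_term] summable_on_def by blast
  have "(exp_term s (exp_op A t x) has_sum S) UNIV"
    by (intro has_sum_SigmaD[OF W] exp_double_term_row_has_sum)
  hence "exp_op A s (exp_op A t x) = S"
    using has_sum_imp_sums exp_op_sums sums_unique2 by blast
  moreover have "(exp_term (s + t) x has_sum S) UNIV"
    using has_sum_diagonals[OF W] by (simp add: exp_double_term_diagonal_sum)
  hence "exp_op A (s + t) x = S"
    using has_sum_imp_sums exp_op_sums sums_unique2 by blast
  ultimately show ?thesis by simp
qed

lemma continuous_on_exp_op: "continuous_on UNIV (\<lambda>t. exp_op A t x)"
proof -
  have "((\<lambda>t'. exp_op A t' x - exp_op A t x) \<longlongrightarrow> 0) (at t)" for t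
  proof (rule Lim_null_comparison)
    show "\<forall>\<^sub>F t' in at t. norm (exp_op A t' x - exp_op A t x)
        \<le> exp (\<bar>t\<bar> * K) * ((exp (\<bar>t' - t\<bar> * K) - 1) * norm x)"
    proof (intro always_eventually allI)
      fix t'
      have "exp_op A t' x - exp_op A t x = exp_op A t (exp_op A (t' - t) x - x)"
        using exp_op_plus[of t "t' - t" x] by (simp add: exp_op_diff)
      hence "norm (exp_op A t' x - exp_op A t x) \<le> exp (\<bar>t\<bar> * K) * norm (exp_op A (t' - t) x - x)"
        using norm_exp_op_le by simp
      also have "\<dots> \<le> exp (\<bar>t\<bar> * K) * ((exp (\<bar>t' - t\<bar> * K) - 1) * norm x)"
        by (rule mult_left_mono[OF norm_exp_op_minus_le]) simp
      finally show "norm (exp_op A t' x - exp_op A t x) \<le> \<dots>" .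
    qed
    have "((\<lambda>t'. exp (\<bar>t\<bar> * K) * ((exp (\<bar>t' - t\<bar> * K) - 1) * norm x))
        \<longlongrightarrow> exp (\<bar>t\<bar> * K) * ((exp (\<bar>t - t\<bar> * K) - 1) * norm x)) (at t)"
      by (intro tendsto_intros)
    thus "((\<lambda>t'. exp (\<bar>t\<bar> * K) * ((exp (\<bar>t' - t\<bar> * K) - 1) * norm x)) \<longlongrightarrow> 0) (at t)"
      by simp
  qed
  thus ?thesis
    by (intro continuous_at_imp_continuous_on ballI) (simp add: isCont_def LIM_zero_cancel)
qed

lemma norm_exp_op_iterate_le:
  assumes "r \<ge> 0" and uniform: "\<And>s x. s \<ge> 0 \<Longrightarrow> norm (exp_op A s x) \<le> M * norm x"
    and contraction: "\<And>x. norm (exp_op A t0 x) \<le> (1/2) * norm x"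
  shows "norm (exp_op A (real m * t0 + r) x) \<le> (1/2) ^ m * M * norm x"
proof (induction m arbitrary: x)
  case 0
  show ?case using uniform[OF \<open>r \<ge> 0\<close>] by simp
next
  case (Suc m)
  have "exp_op A (real (Suc m) * t0 + r) x = exp_op A t0 (exp_op A (real m * t0 + r) x)"
    using exp_op_plus[of t0 "real m * t0 + r" x] by (simp add: algebra_simps)
  hence "norm (exp_op A (real (Suc m) * t0 + r) x) \<le> (1/2) * norm (exp_op A (real m * t0 + r) x)"
    using contraction by simp
  also have "\<dots> \<le> (1/2) * ((1/2) ^ m * M * norm x)"
    using Suc by simp
  finally show ?case by simp
qed

lemma exp_stable_of_contraction:
  assumes "t0 > 0" "M \<ge> 0"
    and uniform: "\<And>s x. s \<ge> 0 \<Longrightarrow> norm (exp_op A s x) \<le> M * norm x"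
    and contraction: "\<And>x. norm (exp_op A t0 x) \<le> (1/2) * norm x"
  shows "exp_stable A"
proof -
  define \<omega> where "\<omega> = - ln 2 / t0"
  have decay: "norm (exp_op A t x) \<le> max 1 (2 * M) * exp (\<omega> * t) * norm x" if "t \<ge> 0" for t x
  proof -
    define m where "m = nat \<lfloor>t / t0\<rfloor>"
    have "real m = of_int \<lfloor>t / t0\<rfloor>"
      using that \<open>t0 > 0\<close> by (simp add: m_def)
    hence "real m \<le> t / t0"
      by linarith
    hence "real m * t0 \<le> t"
      using \<open>t0 > 0\<close> by (simp add: pos_le_divide_eq)
    hence "norm (exp_op A t x) \<le> (1/2) ^ m * M * norm x"
      using norm_exp_op_iterate_le[OF _ uniform contraction, of "t - real m * t0" m x] by simp
    also have "\<dots> \<le> 2 * exp (\<omega> * t) * M * norm x"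
      using half_power_floor_le[OF \<open>t0 > 0\<close> that] \<open>M \<ge> 0\<close> by (simp add: m_def \<omega>_def mult_right_mono)
    also have "\<dots> \<le> max 1 (2 * M) * exp (\<omega> * t) * norm x"
      by (intro mult_right_mono) auto
    finally show ?thesis .
  qed
  show ?thesis
    unfolding exp_stable_def
  proof (intro exI conjI allI impI)
    show "1 \<le> max 1 (2 * M)" "\<omega> < 0"
      using \<open>t0 > 0\<close> by (simp_all add: \<omega>_def)
    show "onorm (exp_op A t) \<le> max 1 (2 * M) * exp (\<omega> * t)" if "0 \<le> t" for t
      by (rule onorm_bound) (use decay[OF that] in auto)
  qed
qed

end

section \<open>Frame bounds for the orbit energy\<close>

definition has_frame_bounds :: "('a::real_normed_vector \<Rightarrow> ennreal) \<Rightarrow> bool" where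
  "has_frame_bounds P \<longleftrightarrow> (\<exists>c>0. \<exists>C>0. \<forall>f.
     ennreal (c * (norm f)\<^sup>2) \<le> P f \<and> P f \<le> ennreal (C * (norm f)\<^sup>2))"

lemma has_frame_boundsI:
  assumes "c > 0" "C > 0" "\<And>f. ennreal (c * (norm f)\<^sup>2) \<le> P f" "\<And>f. P f \<le> ennreal (C * (norm f)\<^sup>2)"
  shows "has_frame_bounds P"
  using assms unfolding has_frame_bounds_def by blast

locale bessel_orbits = bounded_operator A K for A :: "'a::complex_hilbert \<Rightarrow> 'a" and K +
  fixes G :: "'a set" and CB :: real
  assumes countable_G: "countable G" and bessel_bound_pos: "CB > 0"
    and bessel: "\<And>f. (\<integral>\<^sup>+ g. ennreal ((cmod (cinner f g))\<^sup>2) \<partial>count_space G) \<le> ennreal (CB * (norm f)\<^sup>2)"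
begin

definition orbit_energy :: "'a \<Rightarrow> real \<Rightarrow> ennreal" where
  "orbit_energy f t = (\<integral>\<^sup>+ g. ennreal ((cmod (cinner f (exp_op A t g)))\<^sup>2) \<partial>count_space G)"

lemma borel_measurable_cinner_exp_op [measurable]:
  "(\<lambda>t. cinner f (exp_op A t g)) \<in> borel_measurable borel"
  using continuous_on_compose[OF continuous_on_exp_op
      bounded_linear.continuous_on[OF bounded_linear_cinner_right continuous_on_id]]
  by (intro borel_measurable_continuous_onI) (simp add: o_def)

lemma borel_measurable_orbit_energy [measurable]: "orbit_energy f \<in> borel_measurable borel"
  unfolding orbit_energy_def[abs_def]
  by (rule borel_measurable_nn_integral_count_space[OF countable_G]) measurable

lemma sc_frame_iff:
  assumes [measurable]: "S \<in> sets borel"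
  shows "sc_frame A G S \<longleftrightarrow> has_frame_bounds (\<lambda>f. \<integral>\<^sup>+ t\<in>S. orbit_energy f t \<partial>lborel)"
proof -
  have "(\<integral>\<^sup>+ g. (\<integral>\<^sup>+ t\<in>S. ennreal ((cmod (cinner f (exp_op A t g)))\<^sup>2) \<partial>lborel) \<partial>count_space G)
      = (\<integral>\<^sup>+ t\<in>S. orbit_energy f t \<partial>lborel)" for f
    unfolding orbit_energy_def
    by (subst nn_integral_count_space_nn_integral[OF countable_G, symmetric])
       (simp_all add: nn_integral_multc)
  thus ?thesis by (simp add: sc_frame_def has_frame_bounds_def)
qed

lemma frame_fam_iff:
  assumes "finite T"
  shows "frame_fam (\<lambda>(g, t). exp_op A t g) (G \<times> T) \<longleftrightarrow>
    has_frame_bounds (\<lambda>f. \<Sum>\<tau>\<in>T. orbit_energy f \<tau>)"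
  using countable_G assms
  by (simp add: frame_fam_def has_frame_bounds_def nn_integral_count_space_Times_finite
      orbit_energy_def countable_finite)

lemma exp_op_adjoint:
  "\<exists>f'. (\<forall>x. cinner f' x = cinner f (exp_op A s x)) \<and> norm f' \<le> exp (\<bar>s\<bar> * K) * norm f"
  by (rule adjoint_exists[OF exp_op_add exp_op_scaleC norm_exp_op_le]) simp

lemma orbit_energy_adjoint:
  assumes "\<forall>x. cinner f' x = cinner f (exp_op A s x)"
  shows "orbit_energy f' t = orbit_energy f (s + t)"
  using assms by (simp add: orbit_energy_def exp_op_plus)

lemma orbit_energy_adjoint_translate:
  assumes "\<forall>x. cinner f' x = cinner f (exp_op A s x)"
    and "(+) s ` S \<in> sets borel"
  shows "(\<integral>\<^sup>+ t\<in>S. orbit_energy f' t \<partial>lborel) = (\<integral>\<^sup>+ t\<in>(+) s ` S. orbit_energy f t \<partial>lborel)"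
proof -
  have "(\<integral>\<^sup>+ t\<in>S. orbit_energy f' t \<partial>lborel) = (\<integral>\<^sup>+ t\<in>S. orbit_energy f (s + t) \<partial>lborel)"
    using orbit_energy_adjoint[OF assms(1)] by simp
  also have "\<dots> = (\<integral>\<^sup>+ t\<in>(+) s ` S. orbit_energy f t \<partial>lborel)"
    by (rule set_nn_integral_lborel_translate[OF borel_measurable_orbit_energy assms(2)])
  finally show ?thesis .
qed

lemma orbit_energy_le: "orbit_energy f t \<le> ennreal (CB * (exp (\<bar>t\<bar> * K) * norm f)\<^sup>2)"
proof -
  obtain f' where f': "\<forall>x. cinner f' x = cinner f (exp_op A t x)" "norm f' \<le> exp (\<bar>t\<bar> * K) * norm f"
    using exp_op_adjoint by blast
  have "orbit_energy f t = (\<integral>\<^sup>+ g. ennreal ((cmod (cinner f' g))\<^sup>2) \<partial>count_space G)"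
    using f'(1) by (simp add: orbit_energy_def)
  also have "\<dots> \<le> ennreal (CB * (norm f')\<^sup>2)"
    by (rule bessel)
  also have "\<dots> \<le> ennreal (CB * (exp (\<bar>t\<bar> * K) * norm f)\<^sup>2)"
    using f'(2) bessel_bound_pos by (intro ennreal_leI mult_left_mono power_mono) auto
  finally show ?thesis .
qed

lemma orbit_energy_le_twice:
  assumes "\<forall>x. cinner h x = cinner f (exp_op A t x) - cinner f (exp_op A t' x)"
  shows "orbit_energy f t' \<le> 2 * orbit_energy f t + ennreal (2 * CB * (norm h)\<^sup>2)"
proof -
  have "orbit_energy f t'
      \<le> (\<integral>\<^sup>+ g. 2 * ennreal ((cmod (cinner f (exp_op A t g)))\<^sup>2)
                 + 2 * ennreal ((cmod (cinner h g))\<^sup>2) \<partial>count_space G)"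
    unfolding orbit_energy_def
  proof (intro nn_integral_mono)
    fix g
    have "(cmod (cinner f (exp_op A t' g)))\<^sup>2
        \<le> 2 * (cmod (cinner f (exp_op A t g)))\<^sup>2 + 2 * (cmod (cinner h g))\<^sup>2"
      using power2_cmod_le_triangle[of "cinner f (exp_op A t' g)" "cinner f (exp_op A t g)"] assms
      by (simp add: norm_minus_commute)
    hence "ennreal ((cmod (cinner f (exp_op A t' g)))\<^sup>2)
        \<le> ennreal (2 * (cmod (cinner f (exp_op A t g)))\<^sup>2 + 2 * (cmod (cinner h g))\<^sup>2)"
      by (rule ennreal_leI)
    thus "ennreal ((cmod (cinner f (exp_op A t' g)))\<^sup>2)
        \<le> 2 * ennreal ((cmod (cinner f (exp_op A t g)))\<^sup>2) + 2 * ennreal ((cmod (cinner h g))\<^sup>2)"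
      by (simp add: ennreal_plus ennreal_mult)
  qed
  also have "\<dots> = 2 * orbit_energy f t + 2 * (\<integral>\<^sup>+ g. ennreal ((cmod (cinner h g))\<^sup>2) \<partial>count_space G)"
    by (simp add: nn_integral_add nn_integral_cmult orbit_energy_def)
  also have "\<dots> \<le> 2 * orbit_energy f t + 2 * ennreal (CB * (norm h)\<^sup>2)"
    by (intro add_left_mono mult_left_mono bessel) simp
  finally show ?thesis
    using bessel_bound_pos by (simp add: ennreal_mult mult.assoc)
qed

lemma orbit_energy_shift_le:
  fixes f :: 'a and r s :: real
  defines "e \<equiv> ennreal (2 * CB * (exp (\<bar>r\<bar> * K) * (exp (\<bar>s\<bar> * K) - 1) * norm f)\<^sup>2)"
  shows "orbit_energy f r \<le> 2 * orbit_energy f (r + s) + e"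
    and "orbit_energy f (r + s) \<le> 2 * orbit_energy f r + e"
proof -
  define b where "b = exp (\<bar>r\<bar> * K) * (exp (\<bar>s\<bar> * K) - 1)"
  have "b \<ge> 0" using bound_nonneg by (simp add: b_def)
  have "norm (exp_op A (r + s) x - exp_op A r x) \<le> b * norm x" for x
  proof -
    have "exp_op A (r + s) x - exp_op A r x = exp_op A r (exp_op A s x - x)"
      by (simp add: exp_op_plus exp_op_diff)
    hence "norm (exp_op A (r + s) x - exp_op A r x) \<le> exp (\<bar>r\<bar> * K) * norm (exp_op A s x - x)"
      using norm_exp_op_le by simp
    also have "\<dots> \<le> b * norm x"
      unfolding b_def mult.assoc by (rule mult_left_mono[OF norm_exp_op_minus_le]) simp
    finally show ?thesis .
  qed
  then obtain h where h: "\<forall>x. cinner h x = cinner f (exp_op A (r + s) x - exp_op A r x)"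
    and "norm h \<le> b * norm f"
    using adjoint_exists[OF _ _ _ \<open>b \<ge> 0\<close>, of "\<lambda>x. exp_op A (r + s) x - exp_op A r x" f]
    by (auto simp: exp_op_add exp_op_scaleC scaleC_diff_right)
  hence error: "ennreal (2 * CB * (norm h)\<^sup>2) \<le> e"
    using bessel_bound_pos unfolding e_def b_def[symmetric]
    by (intro ennreal_leI mult_left_mono power_mono) auto
  have "\<forall>x. cinner h x = cinner f (exp_op A (r + s) x) - cinner f (exp_op A r x)"
    using h by (simp add: cinner_diff_right)
  from order_trans[OF orbit_energy_le_twice[OF this] add_left_mono[OF error]]
  show "orbit_energy f r \<le> 2 * orbit_energy f (r + s) + e" .
  have "\<forall>x. cinner (- h) x = cinner f (exp_op A r x) - cinner f (exp_op A (r + s) x)"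
    using h by (simp add: cinner_diff_right cinner_minus_left)
  from order_trans[OF orbit_energy_le_twice[OF this] add_left_mono[OF error[unfolded norm_minus_cancel[symmetric, of h]]]]
  show "orbit_energy f (r + s) \<le> 2 * orbit_energy f r + e" .
qed

lemma orbit_energy_shift_bound:
  assumes "\<epsilon> > 0"
  obtains \<delta> where "\<delta> > 0"
    and "\<And>f r s. r \<in> {0..R} \<Longrightarrow> s \<in> {0..\<delta>} \<Longrightarrow>
      orbit_energy f r \<le> 2 * orbit_energy f (r + s) + ennreal (\<epsilon> * (norm f)\<^sup>2)"
    and "\<And>f r s. r \<in> {0..R} \<Longrightarrow> s \<in> {0..\<delta>} \<Longrightarrow>
      orbit_energy f (r + s) \<le> 2 * orbit_energy f r + ennreal (\<epsilon> * (norm f)\<^sup>2)"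
proof -
  define g where "g = (\<lambda>\<delta>. 2 * CB * (exp (R * K) * (exp (\<delta> * K) - 1))\<^sup>2)"
  have "(g \<longlongrightarrow> g 0) (at_right 0)"
    unfolding g_def by (intro tendsto_intros)
  hence "\<forall>\<^sub>F \<delta> in at_right 0. g \<delta> < \<epsilon>"
    using assms by (simp add: g_def order_tendstoD(2))
  then obtain b where "b > 0" and b: "\<And>\<delta>. 0 < \<delta> \<Longrightarrow> \<delta> < b \<Longrightarrow> g \<delta> < \<epsilon>"
    by (auto simp: eventually_at_right_field)
  define \<delta> where "\<delta> = b / 2"
  have "\<delta> > 0" "g \<delta> < \<epsilon>"
    using \<open>b > 0\<close> b by (simp_all add: \<delta>_def)
  have error: "ennreal (2 * CB * (exp (\<bar>r\<bar> * K) * (exp (\<bar>s\<bar> * K) - 1) * norm f)\<^sup>2)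
      \<le> ennreal (\<epsilon> * (norm f)\<^sup>2)" if "r \<in> {0..R}" "s \<in> {0..\<delta>}" for f r s
  proof (rule ennreal_leI)
    have "exp (\<bar>r\<bar> * K) * (exp (\<bar>s\<bar> * K) - 1) \<le> exp (R * K) * (exp (\<delta> * K) - 1)"
      using that bound_nonneg by (intro mult_mono) (auto intro: mult_right_mono)
    hence "2 * CB * (exp (\<bar>r\<bar> * K) * (exp (\<bar>s\<bar> * K) - 1) * norm f)\<^sup>2
        \<le> 2 * CB * (exp (R * K) * (exp (\<delta> * K) - 1) * norm f)\<^sup>2"
      using bound_nonneg bessel_bound_pos
      by (intro mult_left_mono power_mono mult_right_mono) auto
    also have "\<dots> = g \<delta> * (norm f)\<^sup>2"
      by (simp add: g_def power_mult_distrib)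
    also have "\<dots> \<le> \<epsilon> * (norm f)\<^sup>2"
      using \<open>g \<delta> < \<epsilon>\<close> by (simp add: mult_right_mono)
    finally show "2 * CB * (exp (\<bar>r\<bar> * K) * (exp (\<bar>s\<bar> * K) - 1) * norm f)\<^sup>2 \<le> \<epsilon> * (norm f)\<^sup>2" .
  qed
  show ?thesis
    using order_trans[OF orbit_energy_shift_le(1) add_left_mono[OF error]]
      order_trans[OF orbit_energy_shift_le(2) add_left_mono[OF error]]
    by (rule that[OF \<open>\<delta> > 0\<close>])
qed

subsection \<open>Datko's argument\<close>

lemma norm_exp_op_le_of_window_frame:
  assumes "c > 0" "C > 0" "s \<ge> 0"
    and lower: "\<And>f. ennreal (c * (norm f)\<^sup>2) \<le> (\<integral>\<^sup>+ t\<in>{0..L}. orbit_energy f t \<partial>lborel)"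
    and upper: "\<And>f. (\<integral>\<^sup>+ t\<in>{0..}. orbit_energy f t \<partial>lborel) \<le> ennreal (C * (norm f)\<^sup>2)"
  shows "norm (exp_op A s x) \<le> sqrt (C / c) * norm x"
proof (rule norm_le_of_adjoint_bound)
  fix f
  obtain f' where f': "\<forall>x. cinner f' x = cinner f (exp_op A s x)"
    using exp_op_adjoint by blast
  have "ennreal (c * (norm f')\<^sup>2) \<le> (\<integral>\<^sup>+ t\<in>{s..L + s}. orbit_energy f t \<partial>lborel)"
    using lower[of f'] orbit_energy_adjoint_translate[OF f', of "{0..L}"] by simp
  also have "\<dots> \<le> (\<integral>\<^sup>+ t\<in>{0..}. orbit_energy f t \<partial>lborel)"
    using \<open>s \<ge> 0\<close> by (intro set_nn_integral_mono_set) auto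
  also have "\<dots> \<le> ennreal (C * (norm f)\<^sup>2)"
    by (rule upper)
  finally have "(norm f')\<^sup>2 \<le> (sqrt (C / c) * norm f)\<^sup>2"
    using \<open>c > 0\<close> \<open>C > 0\<close> by (simp add: ennreal_le_iff power_mult_distrib field_simps)
  hence "norm f' \<le> sqrt (C / c) * norm f"
    using \<open>c > 0\<close> \<open>C > 0\<close> by (simp add: power2_le_iff_abs_le)
  thus "\<exists>f'. (\<forall>x. cinner f' x = cinner f (exp_op A s x)) \<and> norm f' \<le> sqrt (C / c) * norm f"
    using f' by blast
qed (use \<open>c > 0\<close> \<open>C > 0\<close> in simp)

lemma window_energy_lower_bound:
  fixes x :: 'a
  assumes "c > 0" "M \<ge> 0" "0 \<le> s" "s \<le> t"
    and lower: "\<And>f. ennreal (c * (norm f)\<^sup>2) \<le> (\<integral>\<^sup>+ t\<in>{0..L}. orbit_energy f t \<partial>lborel)"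
    and uniform: "\<And>s x. s \<ge> 0 \<Longrightarrow> norm (exp_op A s x) \<le> M * norm x"
  defines "y \<equiv> exp_op A t x"
  shows "ennreal (c * ((norm y)\<^sup>2)\<^sup>2)
    \<le> ennreal ((M * norm x)\<^sup>2) * (\<integral>\<^sup>+ u\<in>{s..L + s}. orbit_energy y u \<partial>lborel)"
proof -
  obtain f' where f': "\<forall>z. cinner f' z = cinner y (exp_op A s z)"
    using exp_op_adjoint by blast
  \<comment> \<open>factor the orbit as e^(sA) e^((t-s)A) x and pass e^(sA) to the adjoint\<close>
  have "(norm y)\<^sup>2 \<le> cmod (cinner y (exp_op A s (exp_op A (t - s) x)))"
    using exp_op_plus[of s "t - s" x] complex_Re_le_cmod
    by (simp add: y_def power2_norm_eq_Re_cinner)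
  also have "\<dots> \<le> norm f' * (M * norm x)"
    using f' cmod_cinner_le[of f'] uniform[of "t - s" x] \<open>s \<le> t\<close>
    by (metis diff_ge_0_iff_ge mult_left_mono norm_ge_zero order_trans)
  finally have "((norm y)\<^sup>2)\<^sup>2 \<le> (norm f' * (M * norm x))\<^sup>2"
    by (intro power_mono) auto
  hence "c * ((norm y)\<^sup>2)\<^sup>2 \<le> c * ((norm f')\<^sup>2 * (M * norm x)\<^sup>2)"
    using \<open>c > 0\<close> by (simp add: power_mult_distrib)
  hence "c * ((norm y)\<^sup>2)\<^sup>2 \<le> (M * norm x)\<^sup>2 * (c * (norm f')\<^sup>2)"
    by (simp add: ac_simps)
  hence "ennreal (c * ((norm y)\<^sup>2)\<^sup>2) \<le> ennreal ((M * norm x)\<^sup>2) * ennreal (c * (norm f')\<^sup>2)"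
    using \<open>c > 0\<close> by (simp add: ennreal_mult[symmetric] ennreal_leI)
  also have "\<dots> \<le> ennreal ((M * norm x)\<^sup>2) * (\<integral>\<^sup>+ u\<in>{s..L + s}. orbit_energy y u \<partial>lborel)"
    using lower[of f'] orbit_energy_adjoint_translate[OF f', of "{0..L}"]
    by (intro mult_left_mono) simp_all
  finally show ?thesis .
qed

lemma power2_norm_exp_op_windows_le:
  assumes "L > 0" "c > 0" "C > 0" "M \<ge> 0"
    and lower: "\<And>f. ennreal (c * (norm f)\<^sup>2) \<le> (\<integral>\<^sup>+ t\<in>{0..L}. orbit_energy f t \<partial>lborel)"
    and upper: "\<And>f. (\<integral>\<^sup>+ t\<in>{0..}. orbit_energy f t \<partial>lborel) \<le> ennreal (C * (norm f)\<^sup>2)"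
    and uniform: "\<And>s x. s \<ge> 0 \<Longrightarrow> norm (exp_op A s x) \<le> M * norm x"
  shows "real N * c * (norm (exp_op A (real N * (2 * L)) x))\<^sup>2 \<le> M\<^sup>2 * C * (norm x)\<^sup>2"
proof (cases "exp_op A (real N * (2 * L)) x = 0")
  case False
  define y where "y = exp_op A (real N * (2 * L)) x"
  have "ennreal (real N * (c * ((norm y)\<^sup>2)\<^sup>2)) = (\<Sum>j<N. ennreal (c * ((norm y)\<^sup>2)\<^sup>2))"
    using \<open>c > 0\<close> by (simp add: ennreal_mult ennreal_of_nat_eq_real_of_nat)
  also have "\<dots> \<le> (\<Sum>j<N. ennreal ((M * norm x)\<^sup>2)
      * (\<integral>\<^sup>+ u\<in>{real j * (2 * L) .. real j * (2 * L) + L}. orbit_energy y u \<partial>lborel))"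
  proof (intro sum_mono)
    fix j assume "j \<in> {..<N}"
    thus "ennreal (c * ((norm y)\<^sup>2)\<^sup>2) \<le> ennreal ((M * norm x)\<^sup>2)
        * (\<integral>\<^sup>+ u\<in>{real j * (2 * L) .. real j * (2 * L) + L}. orbit_energy y u \<partial>lborel)"
      using window_energy_lower_bound[OF \<open>c > 0\<close> \<open>M \<ge> 0\<close> _ _ lower uniform,
          of "real j * (2 * L)" "real N * (2 * L)" x] \<open>L > 0\<close>
      by (simp add: y_def add.commute)
  qed
  also have "\<dots> \<le> ennreal ((M * norm x)\<^sup>2) * ennreal (C * (norm y)\<^sup>2)"
    unfolding sum_distrib_left[symmetric]
    by (intro mult_left_mono order_trans[OF sum_spaced_windows_le upper]) (simp_all add: \<open>L > 0\<close>)
  also have "\<dots> = ennreal ((M * norm x)\<^sup>2 * (C * (norm y)\<^sup>2))"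
    using \<open>C > 0\<close> by (simp add: ennreal_mult)
  finally have "real N * (c * ((norm y)\<^sup>2)\<^sup>2) \<le> (M * norm x)\<^sup>2 * (C * (norm y)\<^sup>2)"
    using \<open>C > 0\<close> by (subst (asm) ennreal_le_iff) auto
  hence "(real N * c * (norm y)\<^sup>2) * (norm y)\<^sup>2 \<le> (M\<^sup>2 * C * (norm x)\<^sup>2) * (norm y)\<^sup>2"
    by (simp add: power_mult_distrib power2_eq_square ac_simps)
  thus ?thesis
    using False by (simp add: y_def)
qed (use \<open>C > 0\<close> in simp)

lemma exp_op_contraction:
  assumes "L > 0" "c > 0" "C > 0" "M \<ge> 0"
    and lower: "\<And>f. ennreal (c * (norm f)\<^sup>2) \<le> (\<integral>\<^sup>+ t\<in>{0..L}. orbit_energy f t \<partial>lborel)"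
    and upper: "\<And>f. (\<integral>\<^sup>+ t\<in>{0..}. orbit_energy f t \<partial>lborel) \<le> ennreal (C * (norm f)\<^sup>2)"
    and uniform: "\<And>s x. s \<ge> 0 \<Longrightarrow> norm (exp_op A s x) \<le> M * norm x"
  obtains t0 where "t0 > 0" "\<And>x. norm (exp_op A t0 x) \<le> (1/2) * norm x"
proof -
  define N :: nat where "N = nat \<lceil>4 * M\<^sup>2 * C / c\<rceil> + 1"
  have "N > 0" "4 * M\<^sup>2 * C / c \<le> real N"
    unfolding N_def by linarith+
  have "norm (exp_op A (real N * (2 * L)) x) \<le> (1/2) * norm x" for x
  proof -
    have "real N * c * (norm (exp_op A (real N * (2 * L)) x))\<^sup>2 \<le> M\<^sup>2 * C * (norm x)\<^sup>2"
      by (rule power2_norm_exp_op_windows_le[OF assms])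
    also have "\<dots> \<le> real N * c / 4 * (norm x)\<^sup>2"
      using \<open>4 * M\<^sup>2 * C / c \<le> real N\<close> \<open>c > 0\<close> by (intro mult_right_mono) (simp_all add: field_simps)
    finally have "(norm (exp_op A (real N * (2 * L)) x))\<^sup>2 \<le> ((1/2) * norm x)\<^sup>2"
      using \<open>N > 0\<close> \<open>c > 0\<close> by (simp add: power_mult_distrib field_simps)
    thus ?thesis
      by (simp add: power2_le_iff_abs_le)
  qed
  moreover have "real N * (2 * L) > 0"
    using \<open>N > 0\<close> \<open>L > 0\<close> by simp
  ultimately show ?thesis
    using that by blast
qed

lemma exp_stable_of_window_frame:
  assumes "L > 0"
    and window: "has_frame_bounds (\<lambda>f. \<integral>\<^sup>+ t\<in>{0..L}. orbit_energy f t \<partial>lborel)"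
    and total: "has_frame_bounds (\<lambda>f. \<integral>\<^sup>+ t\<in>{0..}. orbit_energy f t \<partial>lborel)"
  shows "exp_stable A"
proof -
  obtain c where "c > 0"
    and lower: "\<And>f. ennreal (c * (norm f)\<^sup>2) \<le> (\<integral>\<^sup>+ t\<in>{0..L}. orbit_energy f t \<partial>lborel)"
    using window unfolding has_frame_bounds_def by blast
  obtain C where "C > 0"
    and upper: "\<And>f. (\<integral>\<^sup>+ t\<in>{0..}. orbit_energy f t \<partial>lborel) \<le> ennreal (C * (norm f)\<^sup>2)"
    using total unfolding has_frame_bounds_def by blast
  define M where "M = sqrt (C / c)"
  have "M \<ge> 0"
    using \<open>c > 0\<close> \<open>C > 0\<close> by (simp add: M_def)
  have uniform: "norm (exp_op A s x) \<le> M * norm x" if "s \<ge> 0" for s x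
    unfolding M_def by (rule norm_exp_op_le_of_window_frame[OF \<open>c > 0\<close> \<open>C > 0\<close> that lower upper])
  obtain t0 where "t0 > 0" "\<And>x. norm (exp_op A t0 x) \<le> (1/2) * norm x"
    using exp_op_contraction[OF \<open>L > 0\<close> \<open>c > 0\<close> \<open>C > 0\<close> \<open>M \<ge> 0\<close> lower upper uniform] by blast
  thus ?thesis
    by (intro exp_stable_of_contraction[OF _ \<open>M \<ge> 0\<close> uniform])
qed

lemma tail_energy_le:
  assumes "b \<ge> 0" and decay: "\<And>x. norm (exp_op A t x) \<le> b * norm x"
    and upper: "\<And>f. (\<integral>\<^sup>+ u\<in>{0..}. orbit_energy f u \<partial>lborel) \<le> ennreal (C * (norm f)\<^sup>2)"
    and "C \<ge> 0"
  shows "(\<integral>\<^sup>+ u\<in>{t..}. orbit_energy f u \<partial>lborel) \<le> ennreal (C * b\<^sup>2 * (norm f)\<^sup>2)"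
proof -
  obtain f' where f': "\<forall>x. cinner f' x = cinner f (exp_op A t x)" and "norm f' \<le> b * norm f"
    using adjoint_exists[OF exp_op_add exp_op_scaleC decay \<open>b \<ge> 0\<close>] by blast
  have "(\<integral>\<^sup>+ u\<in>{t..}. orbit_energy f u \<partial>lborel) = (\<integral>\<^sup>+ u\<in>{0..}. orbit_energy f' u \<partial>lborel)"
    using orbit_energy_adjoint_translate[OF f', of "{0..}"] by simp
  also have "\<dots> \<le> ennreal (C * (norm f')\<^sup>2)"
    by (rule upper)
  also have "\<dots> \<le> ennreal (C * b\<^sup>2 * (norm f)\<^sup>2)"
    using \<open>norm f' \<le> b * norm f\<close> \<open>C \<ge> 0\<close>
    by (intro ennreal_leI) (auto simp: mult.assoc power_mult_distrib[symmetric] intro!: mult_left_mono power_mono)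
  finally show ?thesis .
qed

lemma window_frame_of_exp_stable:
  assumes "exp_stable A"
    and total: "has_frame_bounds (\<lambda>f. \<integral>\<^sup>+ t\<in>{0..}. orbit_energy f t \<partial>lborel)"
  obtains L where "L > 0" "has_frame_bounds (\<lambda>f. \<integral>\<^sup>+ t\<in>{0..L}. orbit_energy f t \<partial>lborel)"
proof -
  obtain M \<omega> where "M \<ge> 1" "\<omega> < 0" and stable: "\<And>t. t \<ge> 0 \<Longrightarrow> onorm (exp_op A t) \<le> M * exp (\<omega> * t)"
    using assms(1) unfolding exp_stable_def by blast
  obtain c C where "c > 0" "C > 0"
    and bounds: "\<And>f. ennreal (c * (norm f)\<^sup>2) \<le> (\<integral>\<^sup>+ t\<in>{0..}. orbit_energy f t \<partial>lborel)"
      "\<And>f. (\<integral>\<^sup>+ t\<in>{0..}. orbit_energy f t \<partial>lborel) \<le> ennreal (C * (norm f)\<^sup>2)"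
    using total unfolding has_frame_bounds_def by blast
  obtain L where "L > 0" and small: "C * (M * exp (\<omega> * L))\<^sup>2 < c / 2"
    using exists_exp_decay_less[OF \<open>\<omega> < 0\<close>, of "c / 2" C M] \<open>c > 0\<close> by auto
  have decay: "norm (exp_op A L x) \<le> M * exp (\<omega> * L) * norm x" for x
    using order_trans[OF onorm[OF bounded_linear_exp_op] mult_right_mono[OF stable]] \<open>L > 0\<close> by simp
  have tail: "(\<integral>\<^sup>+ t\<in>{L..}. orbit_energy f t \<partial>lborel) \<le> ennreal (c / 2 * (norm f)\<^sup>2)" for f
  proof -
    have "(\<integral>\<^sup>+ t\<in>{L..}. orbit_energy f t \<partial>lborel) \<le> ennreal (C * (M * exp (\<omega> * L))\<^sup>2 * (norm f)\<^sup>2)"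
      using \<open>M \<ge> 1\<close> \<open>C > 0\<close> by (intro tail_energy_le[OF _ decay bounds(2)]) simp_all
    also have "\<dots> \<le> ennreal (c / 2 * (norm f)\<^sup>2)"
      using small by (intro ennreal_leI mult_right_mono) simp_all
    finally show ?thesis .
  qed
  have lower: "ennreal ((c / 2) * (norm f)\<^sup>2) \<le> (\<integral>\<^sup>+ t\<in>{0..L}. orbit_energy f t \<partial>lborel)" for f
  proof -
    have "ennreal (c * (norm f)\<^sup>2)
        \<le> (\<integral>\<^sup>+ t\<in>{0..L}. orbit_energy f t \<partial>lborel) + (\<integral>\<^sup>+ t\<in>{L..}. orbit_energy f t \<partial>lborel)"
      using bounds(1)[of f] set_nn_integral_atLeast_le_split[OF borel_measurable_orbit_energy]
      by (rule order_trans)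
    also have "\<dots> \<le> (\<integral>\<^sup>+ t\<in>{0..L}. orbit_energy f t \<partial>lborel) + ennreal (c / 2 * (norm f)\<^sup>2)"
      by (intro add_left_mono tail)
    finally have "ennreal (c * (norm f)\<^sup>2)
        \<le> (\<integral>\<^sup>+ t\<in>{0..L}. orbit_energy f t \<partial>lborel) + ennreal (c / 2 * (norm f)\<^sup>2)" .
    from ennreal_minus_le_of_le_add[OF this] show ?thesis
      using \<open>c > 0\<close> by simp
  qed
  have upper: "(\<integral>\<^sup>+ t\<in>{0..L}. orbit_energy f t \<partial>lborel) \<le> ennreal (C * (norm f)\<^sup>2)" for f
    using set_nn_integral_mono_set[of "{0..L}" "{0..}"] bounds(2) order_trans by fastforce
  have "has_frame_bounds (\<lambda>f. \<integral>\<^sup>+ t\<in>{0..L}. orbit_energy f t \<partial>lborel)"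
    by (rule has_frame_boundsI[OF _ \<open>C > 0\<close> lower upper]) (use \<open>c > 0\<close> in simp)
  with \<open>L > 0\<close> show ?thesis by (rule that)
qed

lemma sum_orbit_energy_le:
  assumes "finite T" "T \<subseteq> {0..L}"
  shows "(\<Sum>\<tau>\<in>T. orbit_energy f \<tau>) \<le> ennreal (real (card T) * CB * (exp (L * K))\<^sup>2 * (norm f)\<^sup>2)"
proof -
  have "(\<Sum>\<tau>\<in>T. orbit_energy f \<tau>) \<le> (\<Sum>\<tau>\<in>T. ennreal (CB * (exp (L * K))\<^sup>2 * (norm f)\<^sup>2))"
  proof (rule sum_mono)
    fix \<tau> assume "\<tau> \<in> T"
    hence "exp (\<bar>\<tau>\<bar> * K) \<le> exp (L * K)"
      using assms(2) bound_nonneg by (auto intro!: mult_right_mono)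
    hence "CB * (exp (\<bar>\<tau>\<bar> * K) * norm f)\<^sup>2 \<le> CB * (exp (L * K))\<^sup>2 * (norm f)\<^sup>2"
      using bessel_bound_pos by (simp add: power_mult_distrib mult_right_mono power_mono)
    thus "orbit_energy f \<tau> \<le> ennreal (CB * (exp (L * K))\<^sup>2 * (norm f)\<^sup>2)"
      using orbit_energy_le order_trans ennreal_leI by blast
  qed
  also have "\<dots> = ennreal (real (card T) * CB * (exp (L * K))\<^sup>2 * (norm f)\<^sup>2)"
    using bessel_bound_pos by (simp add: ennreal_of_nat_eq_real_of_nat ennreal_mult mult.assoc)
  finally show ?thesis .
qed

lemma discrete_frame_of_window_frame:
  assumes "L > 0"
    and window: "has_frame_bounds (\<lambda>f. \<integral>\<^sup>+ t\<in>{0..L}. orbit_energy f t \<partial>lborel)"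
  obtains L' T where "L' > 0" "finite T" "0 \<in> T" "T \<subseteq> {0..L'}"
    "has_frame_bounds (\<lambda>f. \<Sum>\<tau>\<in>T. orbit_energy f \<tau>)"
proof -
  obtain c where "c > 0"
    and lower: "\<And>f. ennreal (c * (norm f)\<^sup>2) \<le> (\<integral>\<^sup>+ t\<in>{0..L}. orbit_energy f t \<partial>lborel)"
    using window unfolding has_frame_bounds_def by blast
  have "c / (2 * L) > 0"
    using \<open>c > 0\<close> \<open>L > 0\<close> by simp
  then obtain \<delta> where "\<delta> > 0" and shift: "\<And>f r s. r \<in> {0..L} \<Longrightarrow> s \<in> {0..\<delta>} \<Longrightarrow>
      orbit_energy f (r + s) \<le> 2 * orbit_energy f r + ennreal (c / (2 * L) * (norm f)\<^sup>2)"
    by (rule orbit_energy_shift_bound) blast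
  define n where "n = nat \<lceil>L / \<delta>\<rceil>"
  define T where "T = (\<lambda>j. real j * \<delta>) ` {..n}"
  have "finite T" "0 \<in> T"
    unfolding T_def by (simp, rule image_eqI[of _ _ 0]) simp_all
  have "real n * \<delta> > 0"
    using \<open>L > 0\<close> \<open>\<delta> > 0\<close> by (simp add: n_def)
  have "T \<subseteq> {0..real n * \<delta>}"
    using \<open>\<delta> > 0\<close> by (auto simp: T_def intro: mult_right_mono)
  have pointwise: "orbit_energy f t \<le> 2 * (\<Sum>\<tau>\<in>T. orbit_energy f \<tau>) + ennreal (c * (norm f)\<^sup>2 / (2 * L))"
    if t: "t \<in> {0..L}" for f t
  proof -
    obtain j where "j \<le> n" "real j * \<delta> \<le> t" "t - real j * \<delta> < \<delta>"
      using grid_point_below[OF \<open>\<delta> > 0\<close> t] unfolding n_def .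
    hence "real j * \<delta> \<in> T" "real j * \<delta> \<in> {0..L}" "t - real j * \<delta> \<in> {0..\<delta>}"
      using t \<open>\<delta> > 0\<close> by (auto simp: T_def)
    hence "orbit_energy f t \<le> 2 * orbit_energy f (real j * \<delta>) + ennreal (c / (2 * L) * (norm f)\<^sup>2)"
      using shift[of "real j * \<delta>" "t - real j * \<delta>" f] by simp
    also have "2 * orbit_energy f (real j * \<delta>) \<le> 2 * (\<Sum>\<tau>\<in>T. orbit_energy f \<tau>)"
      using \<open>real j * \<delta> \<in> T\<close> \<open>finite T\<close> by (intro mult_left_mono member_le_sum) simp_all
    finally show ?thesis by (simp add: add_right_mono)
  qed
  have "ennreal (c * (norm f)\<^sup>2 / (4 * L)) \<le> (\<Sum>\<tau>\<in>T. orbit_energy f \<tau>)" for f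
    using lower_bound_of_interval_average[OF \<open>L > 0\<close> _ lower pointwise] \<open>c > 0\<close> by simp
  moreover have "card T > 0"
    using \<open>finite T\<close> \<open>0 \<in> T\<close> card_gt_0_iff by blast
  ultimately have "has_frame_bounds (\<lambda>f. \<Sum>\<tau>\<in>T. orbit_energy f \<tau>)"
    using \<open>c > 0\<close> \<open>L > 0\<close> bessel_bound_pos
    by (intro has_frame_boundsI[OF _ _ _ sum_orbit_energy_le[OF \<open>finite T\<close> \<open>T \<subseteq> {0..real n * \<delta>}\<close>],
        of "c / (4 * L)"]) (simp_all add: field_simps)
  with \<open>real n * \<delta> > 0\<close> \<open>finite T\<close> \<open>0 \<in> T\<close> \<open>T \<subseteq> {0..real n * \<delta>}\<close> show ?thesis
    by (rule that)
qed

lemma window_energy_ge_of_shifted_sums: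
  assumes "finite T" "T \<subseteq> {0..L}" "\<delta> > 0" "a \<ge> 0"
    and shifted: "\<And>s. s \<in> {0..\<delta>} \<Longrightarrow> ennreal a \<le> 2 * (\<Sum>\<tau>\<in>T. orbit_energy f (\<tau> + s))"
  shows "ennreal (a * \<delta>) \<le> ennreal (2 * real (card T)) * (\<integral>\<^sup>+ t\<in>{0..L + \<delta>}. orbit_energy f t \<partial>lborel)"
proof -
  have "ennreal (a * \<delta>) = (\<integral>\<^sup>+ s\<in>{0..\<delta>}. ennreal a \<partial>lborel)"
    using assms(3,4) by (simp add: nn_integral_cmult_indicator ennreal_mult)
  also have "\<dots> \<le> (\<integral>\<^sup>+ s\<in>{0..\<delta>}. 2 * (\<Sum>\<tau>\<in>T. orbit_energy f (\<tau> + s)) \<partial>lborel)"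
    by (intro nn_integral_mono) (auto split: split_indicator simp: shifted)
  also have "\<dots> = 2 * (\<Sum>\<tau>\<in>T. \<integral>\<^sup>+ s\<in>{0..\<delta>}. orbit_energy f (\<tau> + s) \<partial>lborel)"
    by (simp add: nn_integral_cmult nn_integral_sum sum_distrib_right mult.assoc)
  also have "\<dots> = 2 * (\<Sum>\<tau>\<in>T. \<integral>\<^sup>+ t\<in>{\<tau>..\<tau> + \<delta>}. orbit_energy f t \<partial>lborel)"
    using set_nn_integral_lborel_translate[OF borel_measurable_orbit_energy, of _ "{0..\<delta>}" f]
    by (simp add: add.commute)
  also have "\<dots> \<le> 2 * (\<Sum>\<tau>\<in>T. \<integral>\<^sup>+ t\<in>{0..L + \<delta>}. orbit_energy f t \<partial>lborel)"
    using assms(2) by (intro mult_left_mono sum_mono set_nn_integral_mono_set) auto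
  also have "\<dots> = ennreal (2 * real (card T)) * (\<integral>\<^sup>+ t\<in>{0..L + \<delta>}. orbit_energy f t \<partial>lborel)"
    by (simp add: ennreal_of_nat_eq_real_of_nat ennreal_mult mult.assoc)
  finally show ?thesis .
qed

lemma window_frame_of_discrete_frame:
  assumes "finite T" "0 \<in> T" "T \<subseteq> {0..L}"
    and discrete: "has_frame_bounds (\<lambda>f. \<Sum>\<tau>\<in>T. orbit_energy f \<tau>)"
    and total: "has_frame_bounds (\<lambda>f. \<integral>\<^sup>+ t\<in>{0..}. orbit_energy f t \<partial>lborel)"
  obtains L' where "L' > 0" "has_frame_bounds (\<lambda>f. \<integral>\<^sup>+ t\<in>{0..L'}. orbit_energy f t \<partial>lborel)"
proof -
  obtain c where "c > 0" and lower: "\<And>f. ennreal (c * (norm f)\<^sup>2) \<le> (\<Sum>\<tau>\<in>T. orbit_energy f \<tau>)"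
    using discrete unfolding has_frame_bounds_def by blast
  obtain C where "C > 0"
    and upper: "\<And>f. (\<integral>\<^sup>+ t\<in>{0..}. orbit_energy f t \<partial>lborel) \<le> ennreal (C * (norm f)\<^sup>2)"
    using total unfolding has_frame_bounds_def by blast
  define m where "m = real (card T)"
  have "card T > 0"
    using assms(1,2) card_gt_0_iff by blast
  hence "m > 0"
    by (simp add: m_def)
  hence "c / (2 * m) > 0"
    using \<open>c > 0\<close> by simp
  then obtain \<delta> where "\<delta> > 0" and shift: "\<And>f r s. r \<in> {0..L} \<Longrightarrow> s \<in> {0..\<delta>} \<Longrightarrow>
      orbit_energy f r \<le> 2 * orbit_energy f (r + s) + ennreal (c / (2 * m) * (norm f)\<^sup>2)"
    by (rule orbit_energy_shift_bound) blast
  have shifted: "ennreal (c / 2 * (norm f)\<^sup>2) \<le> 2 * (\<Sum>\<tau>\<in>T. orbit_energy f (\<tau> + s))"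
    if "s \<in> {0..\<delta>}" for f s
  proof -
    have "ennreal (c * (norm f)\<^sup>2)
        \<le> (\<Sum>\<tau>\<in>T. 2 * orbit_energy f (\<tau> + s) + ennreal (c / (2 * m) * (norm f)\<^sup>2))"
      using lower[of f] by (rule order_trans) (use assms(3) that shift in \<open>auto intro!: sum_mono\<close>)
    also have "\<dots> = 2 * (\<Sum>\<tau>\<in>T. orbit_energy f (\<tau> + s)) + ennreal (c / 2 * (norm f)\<^sup>2)"
      using \<open>m > 0\<close> \<open>c > 0\<close>
      by (simp add: sum.distrib sum_distrib_left m_def ennreal_of_nat_eq_real_of_nat ennreal_mult[symmetric])
    finally have "ennreal (c * (norm f)\<^sup>2 - c / 2 * (norm f)\<^sup>2)
        \<le> 2 * (\<Sum>\<tau>\<in>T. orbit_energy f (\<tau> + s))"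
      by (rule ennreal_minus_le_of_le_add) (use \<open>c > 0\<close> in simp)
    thus ?thesis by simp
  qed
  have "ennreal (c * \<delta> / (4 * m) * (norm f)\<^sup>2) \<le> (\<integral>\<^sup>+ t\<in>{0..L + \<delta>}. orbit_energy f t \<partial>lborel)" for f
    using ennreal_divide_le_of_le_mult[OF window_energy_ge_of_shifted_sums[OF assms(1,3) \<open>\<delta> > 0\<close> _ shifted]]
      \<open>c > 0\<close> \<open>m > 0\<close> by (simp add: m_def field_simps)
  moreover have "(\<integral>\<^sup>+ t\<in>{0..L + \<delta>}. orbit_energy f t \<partial>lborel) \<le> ennreal (C * (norm f)\<^sup>2)" for f
    using set_nn_integral_mono_set[of "{0..L + \<delta>}" "{0..}"] upper[of f] by (auto intro: order_trans)
  ultimately have "has_frame_bounds (\<lambda>f. \<integral>\<^sup>+ t\<in>{0..L + \<delta>}. orbit_energy f t \<partial>lborel)"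
    using \<open>c > 0\<close> \<open>\<delta> > 0\<close> \<open>m > 0\<close> \<open>C > 0\<close> by (intro has_frame_boundsI[of "c * \<delta> / (4 * m)" C]) simp_all
  moreover have "L + \<delta> > 0"
    using assms(2,3) \<open>\<delta> > 0\<close> by (simp add: add_nonneg_pos subset_iff)
  ultimately show ?thesis
    using that by blast
qed

lemma window_frame_iff_discrete_frame:
  assumes total: "has_frame_bounds (\<lambda>f. \<integral>\<^sup>+ t\<in>{0..}. orbit_energy f t \<partial>lborel)"
  shows "(\<exists>L>0. has_frame_bounds (\<lambda>f. \<integral>\<^sup>+ t\<in>{0..L}. orbit_energy f t \<partial>lborel))
    \<longleftrightarrow> (\<exists>L>0. \<exists>T. finite T \<and> 0 \<in> T \<and> T \<subseteq> {0..L} \<and> has_frame_bounds (\<lambda>f. \<Sum>\<tau>\<in>T. orbit_energy f \<tau>))"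
proof
  assume "\<exists>L>0. has_frame_bounds (\<lambda>f. \<integral>\<^sup>+ t\<in>{0..L}. orbit_energy f t \<partial>lborel)"
  then obtain L where "L > 0" "has_frame_bounds (\<lambda>f. \<integral>\<^sup>+ t\<in>{0..L}. orbit_energy f t \<partial>lborel)"
    by blast
  then obtain L' T where "L' > 0" "finite T" "0 \<in> T" "T \<subseteq> {0..L'}"
    "has_frame_bounds (\<lambda>f. \<Sum>\<tau>\<in>T. orbit_energy f \<tau>)"
    by (rule discrete_frame_of_window_frame)
  thus "\<exists>L>0. \<exists>T. finite T \<and> 0 \<in> T \<and> T \<subseteq> {0..L} \<and> has_frame_bounds (\<lambda>f. \<Sum>\<tau>\<in>T. orbit_energy f \<tau>)"
    by blast
next
  assume "\<exists>L>0. \<exists>T. finite T \<and> 0 \<in> T \<and> T \<subseteq> {0..L} \<and> has_frame_bounds (\<lambda>f. \<Sum>\<tau>\<in>T. orbit_energy f \<tau>)"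
  then obtain L T where "finite T" "0 \<in> T" "T \<subseteq> {0..L}"
    "has_frame_bounds (\<lambda>f. \<Sum>\<tau>\<in>T. orbit_energy f \<tau>)"
    by blast
  then obtain L' where "L' > 0" "has_frame_bounds (\<lambda>f. \<integral>\<^sup>+ t\<in>{0..L'}. orbit_energy f t \<partial>lborel)"
    using window_frame_of_discrete_frame[OF _ _ _ _ total] by blast
  thus "\<exists>L>0. has_frame_bounds (\<lambda>f. \<integral>\<^sup>+ t\<in>{0..L}. orbit_energy f t \<partial>lborel)"
    by blast
qed

lemma window_frame_iff_exp_stable:
  assumes total: "has_frame_bounds (\<lambda>f. \<integral>\<^sup>+ t\<in>{0..}. orbit_energy f t \<partial>lborel)"
  shows "(\<exists>L>0. has_frame_bounds (\<lambda>f. \<integral>\<^sup>+ t\<in>{0..L}. orbit_energy f t \<partial>lborel)) \<longleftrightarrow> exp_stable A"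
proof
  assume "\<exists>L>0. has_frame_bounds (\<lambda>f. \<integral>\<^sup>+ t\<in>{0..L}. orbit_energy f t \<partial>lborel)"
  thus "exp_stable A"
    using exp_stable_of_window_frame[OF _ _ total] by blast
next
  assume "exp_stable A"
  then obtain L where "L > 0" "has_frame_bounds (\<lambda>f. \<integral>\<^sup>+ t\<in>{0..L}. orbit_energy f t \<partial>lborel)"
    using window_frame_of_exp_stable[OF _ total] by blast
  thus "\<exists>L>0. has_frame_bounds (\<lambda>f. \<integral>\<^sup>+ t\<in>{0..L}. orbit_energy f t \<partial>lborel)"
    by blast
qed

end

lemma bounded_operator_of_bounded_clinear_op:
  assumes "bounded_clinear_op A"
  obtains K where "bounded_operator A K"
proof -
  obtain K where "\<And>x. norm (A x) \<le> norm x * K"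
    using assms unfolding bounded_clinear_op_def by blast
  hence "norm (A x) \<le> max K 0 * norm x" for x
    by (metis max.cobounded1 mult.commute mult_left_mono norm_ge_zero order_trans)
  with assms show ?thesis
    using that[of "max K 0"] unfolding bounded_clinear_op_def bounded_operator_def by auto
qed

theorem mainTheorem5:
  fixes A :: "'a::complex_hilbert \<Rightarrow> 'a" and G :: "'a set"
  assumes "separable_space TYPE('a)"
    and "bounded_clinear_op A"
    and "countable G"
    and "bessel_fam (\<lambda>g. g) G"
    and "sc_frame A G {0..}"
  shows "((\<exists>L>0. sc_frame A G {0..L})
           \<longleftrightarrow> (\<exists>L>0. \<exists>T. finite T \<and> 0 \<in> T \<and> T \<subseteq> {0..L} \<and>
                  frame_fam (\<lambda>(g, t). exp_op A t g) (G \<times> T))) \<and>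
         ((\<exists>L>0. sc_frame A G {0..L}) \<longleftrightarrow> exp_stable A)"
proof -
  obtain K where "bounded_operator A K"
    using assms(2) by (rule bounded_operator_of_bounded_clinear_op)
  moreover obtain CB where "CB > 0"
    "\<And>f. (\<integral>\<^sup>+ g. ennreal ((cmod (cinner f g))\<^sup>2) \<partial>count_space G) \<le> ennreal (CB * (norm f)\<^sup>2)"
    using assms(4) unfolding bessel_fam_def by blast
  ultimately interpret bessel_orbits A K G CB
    using assms(3) by (simp add: bessel_orbits_def bessel_orbits_axioms_def)
  have total: "has_frame_bounds (\<lambda>f. \<integral>\<^sup>+ t\<in>{0..}. orbit_energy f t \<partial>lborel)"
    using assms(5) sc_frame_iff by simp
  have window: "sc_frame A G {0..L} \<longleftrightarrow> has_frame_bounds (\<lambda>f. \<integral>\<^sup>+ t\<in>{0..L}. orbit_energy f t \<partial>lborel)"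
    for L by (simp add: sc_frame_iff)
  have discrete: "frame_fam (\<lambda>(g, t). exp_op A t g) (G \<times> T) \<longleftrightarrow>
      has_frame_bounds (\<lambda>f. \<Sum>\<tau>\<in>T. orbit_energy f \<tau>)" if "finite T" for T
    using that by (rule frame_fam_iff)
  show ?thesis
    using window_frame_iff_discrete_frame[OF total] window_frame_iff_exp_stable[OF total]
    by (simp add: window discrete cong: conj_cong)
qed

end
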